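(* Let $1\le J\le\omega$, let $\mathcal K_j$ ($j\in J$) be Fraïssé classes of finite ordered relational structures each having the Ramsey property, and let $\langle\mathbf A_k:k<\omega\rangle$ be a generating sequence for them. Then the triple $(\mathcal R(\langle\mathbf A_k:k<\omega\rangle),\le,r)$ is closed as a subspace of $\mathcal{AR}^{\mathbb N}$ (with $\mathcal{AR}$ discrete, identifying $B$ with $(r_n(B))_{n<\omega}$), satisfies Todorcevic's axioms A.1–A.4, and hence is a topological Ramsey space: every subset of $\mathcal R$ with the property of Baire in the Ellentuck topology is Ramsey, and every Ellentuck-meager subset is Ramsey null.
   Context: Ordered relational structures: an ordered relational signature is $L=\{<\}\cup\{R_i\}_{i\in I}$ ($I$ countable, $R_i$ of arity $n(i)$). An $L$-structure $\mathbf A$ has a nonempty universe $|\mathbf A|$, a linear order $<^{\mathbf A}$ on it and relations $R_i^{\mathbf A}\subseteq|\mathbf A|^{n(i)}$; $\|\mathbf A\|$ denotes the cardinality of $|\mathbf A|$, whose elements are enumerated increasingly as $a^0<a^1<\dots$. An embedding is an injection preserving and reflecting $<$ and every $R_i$; $\mathbf A\le\mathbf B$ means $\mathbf A$ embeds into $\mathbf B$; a substructure is the image of an identity embedding; $\cong$ is isomorphism. A Fraïssé class of finite ordered relational structures is a class of finite $L$-structures closed under embeddable structures, with the joint embedding and amalgamation properties, countably many isomorphism types, and structures of arbitrarily large finite size. For $\mathbf A\le\mathbf B$, $\binom{\mathbf B}{\mathbf A}$ is the set of substructures of $\mathbf B$ isomorphic to $\mathbf A$; for finite sequences, $\binom{(\mathbf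 B_j)_{j\in J}}{(\mathbf A_j)_{j\in J}}$ is the set of sequences $(\mathbf D_j)_{j\in J}$ with each $\mathbf D_j\in\binom{\mathbf B_j}{\mathbf A_j}$. $\mathcal K$ has the Ramsey property if for all $\mathbf A\le\mathbf B$ in $\mathcal K$ and $k\ge2$ there is $\mathbf C\in\mathcal K$ such that every $k$-coloring of $\binom{\mathbf C}{\mathbf A}$ admits $\mathbf B'\in\binom{\mathbf C}{\mathbf B}$ with $\binom{\mathbf B'}{\mathbf A}$ monochromatic. $(\mathbf C_j)_{j\in J}\to((\mathbf B_j)_{j\in J})^{(\mathbf A_j)_{j\in J}}$ means every 2-coloring of $\binom{(\mathbf C_j)}{(\mathbf A_j)}$ admits $(\mathbf B'_j)\in\binom{(\mathbf C_j)}{(\mathbf B_j)}$ with $\binom{(\mathbf B'_j)}{(\mathbf A_j)}$ monochromatic. Generating sequence: given $1\le J\le\omega$ and classes $\mathcal K_j$ ($j\in J$), put $J_k=J$ if $J<\omega$ and $J_k=k+1$ if $J=\omega$. A generating sequence is $\langle\mathbf A_k:k<\omega\rangle$ with $\mathbf A_k=(\mathbf A_{k,j})_{j\in J_k}$, $\mathbf A_{k,j}\in\mathcal K_j$, such that (1) $\|\mathbf A_{0,j}\|=1$ for $j\in J_0$; (2) $\mathbf A_{k,j}$ is a substructure of $\mathbf A_{k+1,j}$ for $j\in J_k$; (3) for every $j\in J$ and $\mathbf B\in\mathcal K_j$ there is $k$ with $\mathbf B\le\mathbf A_{k,j}$; (4) for all $k<m$ there is $n>m$ with $(\mathbf A_{n,j})_{j\in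 J_k}\to((\mathbf A_{m,j})_{j\in J_k})^{(\mathbf A_{k,j})_{j\in J_k}}$. The space $\mathcal R=\mathcal R(\langle\mathbf A_k\rangle)$: members are $B=\langle\langle n_k,\mathbf B_k\rangle:k<\omega\rangle$ with $(n_k)$ strictly increasing and $\mathbf B_k=(\mathbf B_{k,j})_{j\in J_k}$, $\mathbf B_{k,j}\in\binom{\mathbf A_{n_k,j}}{\mathbf A_{k,j}}$; $B(k)=\langle n_k,\mathbf B_k\rangle$ is the $k$-th block, $\mathcal R(k)=\{B(k):B\in\mathcal R\}$; the top element is $\mathbb A=\langle\langle k,\mathbf A_k\rangle:k<\omega\rangle$. $r_n(B)=\langle B(0),\dots,B(n-1)\rangle$, $\mathcal{AR}_n=\{r_n(B):B\in\mathcal R\}$, $\mathcal{AR}=\bigcup_n\mathcal{AR}_n$. For $C=\langle\langle n_k,\mathbf C_k\rangle\rangle$, $B=\langle\langle m_k,\mathbf B_k\rangle\rangle$: $C\le B$ iff for each $k$ there is $l_k$ with $n_k=m_{l_k}$ and $\mathbf C_{k,j}\in\binom{\mathbf B_{l_k,j}}{\mathbf A_{k,j}}$ for all $j\in J_k$. For $c\in\mathcal{AR}_q$, $b\in\mathcal{AR}_p$: $c\le_{\rm fin}b$ iff there are $C\le B$ with $c=r_q(C)$, $b=r_p(B)$ and every block depth of $c$ is a block depth of $b$. Topological Ramsey space: $[a,B]=\{A\in\mathcal R:A\le B,\ \exists n\ r_n(A)=a\}$; these sets form a base of the Ellentuck topology on $\mathcal R$. $\mathcal X\subseteq\mathcal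 R$ is Ramsey if for every nonempty $[a,A]$ there is $B\in[a,A]$ with $[a,B]\subseteq\mathcal X$ or $[a,B]\cap\mathcal X=\emptyset$; Ramsey null if always the latter can be achieved. *)

theory Defs
  imports "HOL-Analysis.Analysis" "HOL-Library.Sublist"
begin

text \<open>An ordered relational signature is given by a set I of relation indices together with an
  arity function ar.  The strict linear order is the field lt; rel i is the interpretation of R_i.\<close>

record ostr =
  univ :: "nat set"
  lt :: "(nat \<times> nat) set"
  rel :: "nat \<Rightarrow> nat list set"

definition wf_str :: "ostr \<Rightarrow> bool" where
  "wf_str A \<longleftrightarrow> univ A \<noteq> {} \<and> lt A \<subseteq> univ A \<times> univ A
     \<and> strict_linear_order_on (univ A) (lt A) \<and> (\<forall>i. rel A i \<subseteq> lists (univ A))"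

definition is_Lstr :: "nat set \<Rightarrow> (nat \<Rightarrow> nat) \<Rightarrow> ostr \<Rightarrow> bool" where
  "is_Lstr I ar A \<longleftrightarrow> wf_str A \<and> (\<forall>i. i \<notin> I \<longrightarrow> rel A i = {})
     \<and> (\<forall>i\<in>I. \<forall>xs\<in>rel A i. length xs = ar i)"

definition embedding :: "(nat \<Rightarrow> nat) \<Rightarrow> ostr \<Rightarrow> ostr \<Rightarrow> bool" where
  "embedding f A B \<longleftrightarrow> inj_on f (univ A) \<and> f ` univ A \<subseteq> univ B
     \<and> (\<forall>x\<in>univ A. \<forall>y\<in>univ A. (x, y) \<in> lt A \<longleftrightarrow> (f x, f y) \<in> lt B)
     \<and> (\<forall>i. \<forall>xs\<in>lists (univ A). xs \<in> rel A i \<longleftrightarrow> map f xs \<in> rel B i)"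

definition embeds :: "ostr \<Rightarrow> ostr \<Rightarrow> bool" where
  "embeds A B \<longleftrightarrow> (\<exists>f. embedding f A B)"

definition isomorphic :: "ostr \<Rightarrow> ostr \<Rightarrow> bool" where
  "isomorphic A B \<longleftrightarrow> (\<exists>f. embedding f A B \<and> f ` univ A = univ B)"

definition substructure :: "ostr \<Rightarrow> ostr \<Rightarrow> bool" where
  "substructure D B \<longleftrightarrow> wf_str D \<and> univ D \<subseteq> univ B \<and> embedding id D B"

definition binom :: "ostr \<Rightarrow> ostr \<Rightarrow> ostr set" where
  "binom B A = {D. substructure D B \<and> isomorphic D A}"

definition fraisse_class :: "nat set \<Rightarrow> (nat \<Rightarrow> nat) \<Rightarrow> ostr set \<Rightarrow> bool" where
  "fraisse_class I ar K \<longleftrightarrow>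
     (\<forall>A\<in>K. is_Lstr I ar A \<and> finite (univ A))
   \<and> (\<forall>A B. B \<in> K \<longrightarrow> wf_str A \<longrightarrow> finite (univ A) \<longrightarrow> embeds A B \<longrightarrow> A \<in> K)
   \<and> (\<forall>A\<in>K. \<forall>B\<in>K. \<exists>C\<in>K. embeds A C \<and> embeds B C)
   \<and> (\<forall>A\<in>K. \<forall>B\<in>K. \<forall>C\<in>K. \<forall>f g. embedding f A B \<longrightarrow> embedding g A C \<longrightarrow>
        (\<exists>D\<in>K. \<exists>f' g'. embedding f' B D \<and> embedding g' C D
            \<and> (\<forall>x\<in>univ A. f' (f x) = g' (g x))))
   \<and> (\<exists>S. countable S \<and> S \<subseteq> K \<and> (\<forall>A\<in>K. \<exists>B\<in>S. isomorphic A B))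
   \<and> (\<forall>n. \<exists>A\<in>K. card (univ A) \<ge> n)"

definition ramsey_property :: "ostr set \<Rightarrow> bool" where
  "ramsey_property K \<longleftrightarrow>
     (\<forall>A\<in>K. \<forall>B\<in>K. embeds A B \<longrightarrow> (\<forall>k::nat. k \<ge> 2 \<longrightarrow>
        (\<exists>C\<in>K. \<forall>(col :: ostr \<Rightarrow> nat). (\<forall>D\<in>binom C A. col D < k) \<longrightarrow>
           (\<exists>B'\<in>binom C B. \<exists>c. \<forall>D\<in>binom B' A. col D = c))))"

text \<open>Sequences of structures indexed by j < N, represented as lists of length N.\<close>
definition seq_binom :: "nat \<Rightarrow> (nat \<Rightarrow> ostr) \<Rightarrow> (nat \<Rightarrow> ostr) \<Rightarrow> ostr list set" where
  "seq_binom N C A = {Ds. length Ds = N \<and> (\<forall>j<N. Ds ! j \<in> binom (C j) (A j))}"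

definition arrow :: "nat \<Rightarrow> (nat \<Rightarrow> ostr) \<Rightarrow> (nat \<Rightarrow> ostr) \<Rightarrow> (nat \<Rightarrow> ostr) \<Rightarrow> bool" where
  "arrow N C B A \<longleftrightarrow> (\<forall>(col :: ostr list \<Rightarrow> bool).
      \<exists>Bs\<in>seq_binom N C B. \<exists>c. \<forall>Ds\<in>seq_binom N (\<lambda>j. Bs ! j) A. col Ds = c)"

text \<open>J :: enat with 1 \<le> J \<le> \<omega> (\<omega> = \<infinity>).  Jk J k is J_k.\<close>
definition Jk :: "enat \<Rightarrow> nat \<Rightarrow> nat" where
  "Jk J k = (case J of enat m \<Rightarrow> m | \<infinity> \<Rightarrow> Suc k)"

definition generating_seq ::
  "enat \<Rightarrow> (nat \<Rightarrow> ostr set) \<Rightarrow> (nat \<Rightarrow> nat \<Rightarrow> ostr) \<Rightarrow> bool" where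
  "generating_seq J K A \<longleftrightarrow>
     (\<forall>k. \<forall>j<Jk J k. A k j \<in> K j)
   \<and> (\<forall>j<Jk J 0. card (univ (A 0 j)) = 1)
   \<and> (\<forall>k. \<forall>j<Jk J k. substructure (A k j) (A (Suc k) j))
   \<and> (\<forall>j. enat j < J \<longrightarrow> (\<forall>B\<in>K j. \<exists>k. j < Jk J k \<and> embeds B (A k j)))
   \<and> (\<forall>k m. k < m \<longrightarrow> (\<exists>n>m. arrow (Jk J k) (A n) (A m) (A k)))"

type_synonym block = "nat \<times> ostr list"
type_synonym seqR = "nat \<Rightarrow> block"

definition RR :: "enat \<Rightarrow> (nat \<Rightarrow> nat \<Rightarrow> ostr) \<Rightarrow> seqR set" where
  "RR J A = {B. strict_mono (\<lambda>k. fst (B k))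
     \<and> (\<forall>k. length (snd (B k)) = Jk J k
          \<and> (\<forall>j<Jk J k. snd (B k) ! j \<in> binom (A (fst (B k)) j) (A k j)))}"

definition top_elem :: "enat \<Rightarrow> (nat \<Rightarrow> nat \<Rightarrow> ostr) \<Rightarrow> seqR" where
  "top_elem J A = (\<lambda>k. (k, map (A k) [0..<Jk J k]))"

definition rn :: "nat \<Rightarrow> seqR \<Rightarrow> block list" where
  "rn n B = map B [0..<n]"

definition ARn :: "enat \<Rightarrow> (nat \<Rightarrow> nat \<Rightarrow> ostr) \<Rightarrow> nat \<Rightarrow> block list set" where
  "ARn J A n = {rn n B | B. B \<in> RR J A}"

definition AR :: "enat \<Rightarrow> (nat \<Rightarrow> nat \<Rightarrow> ostr) \<Rightarrow> block list set" where
  "AR J A = (\<Union>n. ARn J A n)"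

definition leR :: "enat \<Rightarrow> (nat \<Rightarrow> nat \<Rightarrow> ostr) \<Rightarrow> seqR \<Rightarrow> seqR \<Rightarrow> bool" where
  "leR J A C B \<longleftrightarrow> (\<forall>k. \<exists>l. fst (C k) = fst (B l)
      \<and> (\<forall>j<Jk J k. snd (C k) ! j \<in> binom (snd (B l) ! j) (A k j)))"

definition le_fin :: "enat \<Rightarrow> (nat \<Rightarrow> nat \<Rightarrow> ostr) \<Rightarrow> block list \<Rightarrow> block list \<Rightarrow> bool" where
  "le_fin J A c b \<longleftrightarrow> (\<exists>C B. C \<in> RR J A \<and> B \<in> RR J A \<and> leR J A C B
      \<and> c = rn (length c) C \<and> b = rn (length b) B \<and> fst ` set c \<subseteq> fst ` set b)"

definition basic :: "enat \<Rightarrow> (nat \<Rightarrow> nat \<Rightarrow> ostr) \<Rightarrow> block list \<Rightarrow> seqR \<Rightarrow> seqR set" where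
  "basic J A a B = {X \<in> RR J A. leR J A X B \<and> (\<exists>n. rn n X = a)}"

definition ellentuck :: "enat \<Rightarrow> (nat \<Rightarrow> nat \<Rightarrow> ostr) \<Rightarrow> seqR topology" where
  "ellentuck J A = topology_generated_by {basic J A a B | a B. a \<in> AR J A \<and> B \<in> RR J A}"

definition ramsey_set :: "enat \<Rightarrow> (nat \<Rightarrow> nat \<Rightarrow> ostr) \<Rightarrow> seqR set \<Rightarrow> bool" where
  "ramsey_set J A X \<longleftrightarrow> (\<forall>a B. B \<in> RR J A \<longrightarrow> basic J A a B \<noteq> {} \<longrightarrow>
     (\<exists>C\<in>basic J A a B. basic J A a C \<subseteq> X \<or> basic J A a C \<inter> X = {}))"

definition ramsey_null :: "enat \<Rightarrow> (nat \<Rightarrow> nat \<Rightarrow> ostr) \<Rightarrow> seqR set \<Rightarrow> bool" where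
  "ramsey_null J A X \<longleftrightarrow> (\<forall>a B. B \<in> RR J A \<longrightarrow> basic J A a B \<noteq> {} \<longrightarrow>
     (\<exists>C\<in>basic J A a B. basic J A a C \<inter> X = {}))"

definition nowhere_dense_in :: "'a topology \<Rightarrow> 'a set \<Rightarrow> bool" where
  "nowhere_dense_in T S \<longleftrightarrow> S \<subseteq> topspace T \<and> T interior_of (T closure_of S) = {}"

definition meager_in :: "'a topology \<Rightarrow> 'a set \<Rightarrow> bool" where
  "meager_in T S \<longleftrightarrow> (\<exists>F. countable F \<and> (\<forall>N\<in>F. nowhere_dense_in T N) \<and> S \<subseteq> \<Union>F)"

definition baire_property_in :: "'a topology \<Rightarrow> 'a set \<Rightarrow> bool" where
  "baire_property_in T S \<longleftrightarrow> S \<subseteq> topspace T \<and>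
     (\<exists>U. openin T U \<and> meager_in T ((S - U) \<union> (U - S)))"

definition depth_finite :: "enat \<Rightarrow> (nat \<Rightarrow> nat \<Rightarrow> ostr) \<Rightarrow> seqR \<Rightarrow> block list \<Rightarrow> bool" where
  "depth_finite J A B a \<longleftrightarrow> (\<exists>n. le_fin J A a (rn n B))"

definition depth :: "enat \<Rightarrow> (nat \<Rightarrow> nat \<Rightarrow> ostr) \<Rightarrow> seqR \<Rightarrow> block list \<Rightarrow> nat" where
  "depth J A B a = (LEAST n. le_fin J A a (rn n B))"

definition axiom_A1 :: "enat \<Rightarrow> (nat \<Rightarrow> nat \<Rightarrow> ostr) \<Rightarrow> bool" where
  "axiom_A1 J A \<longleftrightarrow>
     (\<forall>X\<in>RR J A. rn 0 X = [])
   \<and> (\<forall>X\<in>RR J A. \<forall>Y\<in>RR J A. X \<noteq> Y \<longrightarrow> (\<exists>n. rn n X \<noteq> rn n Y))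
   \<and> (\<forall>X\<in>RR J A. \<forall>Y\<in>RR J A. \<forall>n m. rn n X = rn m Y \<longrightarrow>
        n = m \<and> (\<forall>i<n. rn i X = rn i Y))"

definition axiom_A2 :: "enat \<Rightarrow> (nat \<Rightarrow> nat \<Rightarrow> ostr) \<Rightarrow> bool" where
  "axiom_A2 J A \<longleftrightarrow>
     (\<forall>a\<in>AR J A. le_fin J A a a)
   \<and> (\<forall>a\<in>AR J A. \<forall>b\<in>AR J A. \<forall>c\<in>AR J A. le_fin J A a b \<longrightarrow> le_fin J A b c \<longrightarrow> le_fin J A a c)
   \<and> (\<forall>b\<in>AR J A. finite {a. le_fin J A a b})
   \<and> (\<forall>X\<in>RR J A. \<forall>Y\<in>RR J A. leR J A X Y \<longleftrightarrow> (\<forall>n. \<exists>m. le_fin J A (rn n X) (rn m Y)))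
   \<and> (\<forall>a\<in>AR J A. \<forall>b\<in>AR J A. \<forall>c\<in>AR J A. prefix a b \<longrightarrow> le_fin J A b c \<longrightarrow>
        (\<exists>d. prefix d c \<and> le_fin J A a d))"

definition axiom_A3 :: "enat \<Rightarrow> (nat \<Rightarrow> nat \<Rightarrow> ostr) \<Rightarrow> bool" where
  "axiom_A3 J A \<longleftrightarrow>
     (\<forall>a\<in>AR J A. \<forall>B\<in>RR J A. depth_finite J A B a \<longrightarrow>
        (\<forall>X\<in>basic J A (rn (depth J A B a) B) B. basic J A a X \<noteq> {}))
   \<and> (\<forall>a\<in>AR J A. \<forall>X\<in>RR J A. \<forall>B\<in>RR J A. leR J A X B \<longrightarrow> basic J A a X \<noteq> {} \<longrightarrow>
        (\<exists>X'\<in>basic J A (rn (depth J A B a) B) B.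
            basic J A a X' \<noteq> {} \<and> basic J A a X' \<subseteq> basic J A a X))"

definition axiom_A4 :: "enat \<Rightarrow> (nat \<Rightarrow> nat \<Rightarrow> ostr) \<Rightarrow> bool" where
  "axiom_A4 J A \<longleftrightarrow>
     (\<forall>a\<in>AR J A. \<forall>B\<in>RR J A. \<forall>Ob. depth_finite J A B a \<longrightarrow> Ob \<subseteq> ARn J A (Suc (length a)) \<longrightarrow>
        (\<exists>X\<in>basic J A (rn (depth J A B a) B) B.
            rn (Suc (length a)) ` basic J A a X \<subseteq> Ob
          \<or> rn (Suc (length a)) ` basic J A a X \<subseteq> - Ob))"

end

theory Submission
  imports Defs
begin

text \<open>The axioms A.1--A.3 are bookkeeping with finite approximations, using that a copy of
  an earlier level can be found inside every later block. A.4 comes from the arrow relations of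
  the generating sequence: they give, inside every block, a sub-block on which the colour of the
  one-block extensions is constant, and a pigeonhole argument over infinitely many blocks makes
  this colour uniform.

  The Ramsey property is proved as in Ellentuck's theorem. For an Ellentuck-open set one
  diagonalises over all finite extensions of a given approximation, first deciding each of them
  (accept into the set, or reject) and then propagating rejection one block at a time; by A.4 a
  rejected approximation has only rejected one-block extensions. Hence open sets are Ramsey and
  nowhere dense sets are Ramsey null; a second diagonalisation shows that countable unions of
  Ramsey null sets are Ramsey null, so meager sets are Ramsey null, and a set with the property
  of Baire, differing from an open set by a meager set, is Ramsey.\<close>

section \<open>Induced substructures and copies\<close>

definition induced :: "ostr \<Rightarrow> nat set \<Rightarrow> ostr" where
  "induced D S = \<lparr>univ = S, lt = lt D \<inter> (S \<times> S), rel = (\<lambda>i. rel D i \<inter> lists S)\<rparr>"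

lemma univ_induced [simp]: "univ (induced D S) = S"
  by (simp add: induced_def)

lemma induced_induced: "S \<subseteq> T \<Longrightarrow> induced (induced D T) S = induced D S"
  by (auto simp: induced_def)

lemma wf_str_induced:
  assumes "wf_str D" "S \<subseteq> univ D" "S \<noteq> {}"
  shows "wf_str (induced D S)"
proof -
  have "trans (lt D)" "irrefl (lt D)" "total_on (univ D) (lt D)"
    using assms(1) by (auto simp: wf_str_def strict_linear_order_on_def)
  then have "trans (lt D \<inter> S \<times> S)" "irrefl (lt D \<inter> S \<times> S)" "total_on S (lt D \<inter> S \<times> S)"
    using assms(2) unfolding trans_def irrefl_def total_on_def by blast+
  then show ?thesis
    using assms unfolding wf_str_def induced_def strict_linear_order_on_def by auto
qed

lemma substructure_induced:
  "wf_str D \<Longrightarrow> S \<subseteq> univ D \<Longrightarrow> S \<noteq> {} \<Longrightarrow> substructure (induced D S) D"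
  using wf_str_induced[of D S] by (auto simp: substructure_def embedding_def induced_def)

lemma substructure_eq_induced:
  assumes "substructure D F"
  shows "D = induced F (univ D)"
proof -
  have D: "wf_str D" "univ D \<subseteq> univ F" "embedding id D F"
    using assms by (auto simp: substructure_def)
  have "lt D = lt F \<inter> (univ D \<times> univ D)"
    using D unfolding wf_str_def embedding_def by auto
  moreover have "rel D i = rel F i \<inter> lists (univ D)" for i
  proof -
    have "rel D i \<subseteq> lists (univ D)" "\<forall>xs\<in>lists (univ D). xs \<in> rel D i \<longleftrightarrow> xs \<in> rel F i"
      using D by (auto simp: wf_str_def embedding_def)
    then show ?thesis by blast
  qed
  ultimately show ?thesis
    unfolding induced_def by (intro ostr.equality) (auto simp: fun_eq_iff)
qed

lemma finite_substructures: "finite (univ F) \<Longrightarrow> finite {D. substructure D F}"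
  by (rule finite_subset[where B = "induced F ` Pow (univ F)"])
     (use substructure_eq_induced in \<open>auto simp: substructure_def\<close>)

lemma embedding_comp:
  assumes "embedding f A B" "embedding g B C"
  shows "embedding (g \<circ> f) A C"
proof -
  have f: "inj_on f (univ A)" "f ` univ A \<subseteq> univ B" and g: "inj_on g (univ B)" "g ` univ B \<subseteq> univ C"
    using assms by (auto simp: embedding_def)
  have "map f xs \<in> lists (univ B)" if "xs \<in> lists (univ A)" for xs
    using that f by (auto simp: image_subset_iff)
  with assms f g show ?thesis
    unfolding embedding_def by (auto simp: image_subset_iff comp_inj_on inj_on_subset)
qed

lemma embedding_substructure:
  "substructure Y X \<Longrightarrow> embedding h X E \<Longrightarrow> embedding h Y E"
  using embedding_comp[of id Y X h E] by (simp add: substructure_def)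

lemma substructure_refl: "wf_str D \<Longrightarrow> substructure D D"
  by (auto simp: substructure_def embedding_def)

lemma substructure_trans: "substructure D E \<Longrightarrow> substructure E F \<Longrightarrow> substructure D F"
  using embedding_comp[of id D E id F] by (auto simp: substructure_def)

lemma embedding_inv_into:
  assumes "embedding f D X"
  shows "embedding (inv_into (univ D) f) (induced X (f ` univ D)) D"
proof -
  let ?h = "inv_into (univ D) f"
  have inj: "inj_on f (univ D)"
    using assms by (simp add: embedding_def)
  have bij: "bij_betw ?h (f ` univ D) (univ D)"
    using inj by (simp add: bij_betw_inv_into inj_on_imp_bij_betw)
  have fh: "f (?h y) = y" if "y \<in> f ` univ D" for y
    using that by (simp add: f_inv_into_f)
  have hD: "?h y \<in> univ D" if "y \<in> f ` univ D" for y
    using that by (simp add: inv_into_into)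
  have map_fh: "map f (map ?h xs) = xs" if "xs \<in> lists (f ` univ D)" for xs
    using that fh by (induct xs) auto
  show ?thesis
    unfolding embedding_def
  proof (intro conjI allI ballI)
    fix x y assume "x \<in> univ (induced X (f ` univ D))" "y \<in> univ (induced X (f ` univ D))"
    then have xy: "x \<in> f ` univ D" "y \<in> f ` univ D" by simp_all
    then have "(?h x, ?h y) \<in> lt D \<longleftrightarrow> (f (?h x), f (?h y)) \<in> lt X"
      using assms hD unfolding embedding_def by blast
    with xy show "(x, y) \<in> lt (induced X (f ` univ D)) \<longleftrightarrow> (?h x, ?h y) \<in> lt D"
      by (simp add: induced_def fh)
  next
    fix i xs assume "xs \<in> lists (univ (induced X (f ` univ D)))"
    then have xs: "xs \<in> lists (f ` univ D)" by simp
    then have "map ?h xs \<in> lists (univ D)" using hD by auto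
    then have "map ?h xs \<in> rel D i \<longleftrightarrow> map f (map ?h xs) \<in> rel X i"
      using assms unfolding embedding_def by blast
    with xs map_fh[OF xs] show "xs \<in> rel (induced X (f ` univ D)) i \<longleftrightarrow> map ?h xs \<in> rel D i"
      by (simp add: induced_def)
  qed (use bij in \<open>auto simp: bij_betw_def\<close>)
qed

lemma embedding_induced_univ: "embedding h (induced X (univ X)) D \<longleftrightarrow> embedding h X D"
  by (auto simp: embedding_def induced_def)

lemma isomorphic_sym: "isomorphic D X \<Longrightarrow> isomorphic X D"
proof -
  assume "isomorphic D X"
  then obtain f where f: "embedding f D X" "f ` univ D = univ X"
    by (auto simp: isomorphic_def)
  then have "bij_betw f (univ D) (univ X)"
    by (simp add: bij_betw_def embedding_def)
  then have "inv_into (univ D) f ` univ X = univ D"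
    using bij_betw_inv_into bij_betw_imp_surj_on by blast
  moreover have "embedding (inv_into (univ D) f) X D"
    using embedding_inv_into[OF f(1)] f(2) embedding_induced_univ by metis
  ultimately show ?thesis
    unfolding isomorphic_def by blast
qed

lemma isomorphic_trans: "isomorphic D X \<Longrightarrow> isomorphic X Y \<Longrightarrow> isomorphic D Y"
proof -
  assume "isomorphic D X" "isomorphic X Y"
  then obtain f g where "embedding f D X" "f ` univ D = univ X" "embedding g X Y" "g ` univ X = univ Y"
    by (auto simp: isomorphic_def)
  moreover have "(g \<circ> f) ` univ D = g ` (f ` univ D)"
    by (rule image_comp[symmetric])
  ultimately show ?thesis
    unfolding isomorphic_def using embedding_comp by metis
qed

lemma embedding_image_in_binom:
  assumes "embedding g Y D" "wf_str D" "univ Y \<noteq> {}"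
  shows "induced D (g ` univ Y) \<in> binom D Y"
proof -
  have "substructure (induced D (g ` univ Y)) D"
    using assms by (intro substructure_induced) (auto simp: embedding_def wf_str_def)
  moreover have "isomorphic (induced D (g ` univ Y)) Y"
  proof -
    have "inv_into (univ Y) g ` univ (induced D (g ` univ Y)) = univ Y"
      using assms(1) by (simp add: embedding_def inv_into_image_cancel)
    with embedding_inv_into[OF assms(1)] show ?thesis
      unfolding isomorphic_def by blast
  qed
  ultimately show ?thesis
    by (simp add: binom_def)
qed

lemma binom_isomorphic: "D \<in> binom E X \<Longrightarrow> isomorphic X Y \<Longrightarrow> D \<in> binom E Y"
  unfolding binom_def using isomorphic_trans by blast

lemma binom_trans: "D \<in> binom E Y \<Longrightarrow> E \<in> binom F X \<Longrightarrow> D \<in> binom F Y"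
  unfolding binom_def using substructure_trans by blast

lemma binom_nonempty:
  assumes "isomorphic D X" "substructure Y X" "wf_str D"
  shows "binom D Y \<noteq> {}"
proof -
  obtain h where "embedding h X D"
    using isomorphic_sym[OF assms(1)] by (auto simp: isomorphic_def)
  moreover have "univ Y \<noteq> {}"
    using assms(2) by (simp add: substructure_def wf_str_def)
  ultimately show ?thesis
    using embedding_image_in_binom[OF embedding_substructure[OF assms(2)] assms(3)] by blast
qed

lemma Jk_mono: "k \<le> l \<Longrightarrow> Jk J k \<le> Jk J l"
  by (cases J) (auto simp: Jk_def)

lemma rn_length [simp]: "length (rn n B) = n"
  by (simp add: rn_def)

lemma rn_nth [simp]: "k < n \<Longrightarrow> rn n B ! k = B k"
  by (simp add: rn_def)

lemma rn_eq_iff: "rn n B = rn n C \<longleftrightarrow> (\<forall>k<n. B k = C k)"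
  by (auto simp: rn_def)

lemma rn_eq_mono: "rn n B = rn n C \<Longrightarrow> m \<le> n \<Longrightarrow> rn m B = rn m C"
  by (auto simp: rn_eq_iff)

lemma take_rn: "m \<le> n \<Longrightarrow> take m (rn n Z) = rn m Z"
  by (simp add: rn_def take_map)

lemma rn_Suc: "rn (Suc n) Z = rn n Z @ [Z n]"
  by (simp add: rn_def)

lemma last_rn: "0 < n \<Longrightarrow> last (rn n Z) = Z (n - 1)"
  by (simp add: rn_def last_map)

section \<open>Blocks and the space R\<close>

locale block_space =
  fixes J :: enat and A :: "nat \<Rightarrow> nat \<Rightarrow> ostr"
  assumes wf_A: "\<And>k j. j < Jk J k \<Longrightarrow> wf_str (A k j)"
    and finite_A: "\<And>k j. j < Jk J k \<Longrightarrow> finite (univ (A k j))"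
    and substructure_A_Suc: "\<And>k j. j < Jk J k \<Longrightarrow> substructure (A k j) (A (Suc k) j)"
    and arrow_A: "\<And>k m. k < m \<Longrightarrow> \<exists>n>m. arrow (Jk J k) (A n) (A m) (A k)"
begin

abbreviation "R \<equiv> RR J A"
abbreviation "leq \<equiv> leR J A"
abbreviation "bs \<equiv> basic J A"

text \<open>A block is a pair \<open>\<langle>n\<^sub>k, B\<^sub>k\<rangle>\<close> as in the paper, the \<open>k\<close>-th entry of a member of R.\<close>

definition is_block :: "nat \<Rightarrow> block \<Rightarrow> bool" where
  "is_block k c \<longleftrightarrow> length (snd c) = Jk J k \<and> (\<forall>j<Jk J k. snd c ! j \<in> binom (A (fst c) j) (A k j))"

definition sub_block :: "nat \<Rightarrow> block \<Rightarrow> block \<Rightarrow> bool" where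
  "sub_block k c e \<longleftrightarrow> fst c = fst e \<and> (\<forall>j<Jk J k. snd c ! j \<in> binom (snd e ! j) (A k j))"

lemma RR_iff: "B \<in> R \<longleftrightarrow> strict_mono (\<lambda>k. fst (B k)) \<and> (\<forall>k. is_block k (B k))"
  by (auto simp: RR_def is_block_def)

lemma leR_iff: "leq C B \<longleftrightarrow> (\<forall>k. \<exists>l. sub_block k (C k) (B l))"
  by (simp add: leR_def sub_block_def)

lemma RR_block: "B \<in> R \<Longrightarrow> is_block k (B k)"
  by (simp add: RR_iff)

lemma RR_fst_less: "B \<in> R \<Longrightarrow> fst (B l) < fst (B l') \<longleftrightarrow> l < l'"
  unfolding RR_iff using strict_mono_less by blast

lemma RR_fst_le: "B \<in> R \<Longrightarrow> fst (B l) \<le> fst (B l') \<longleftrightarrow> l \<le> l'"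
  unfolding RR_iff using strict_mono_less_eq by blast

lemma RR_fst_eq: "B \<in> R \<Longrightarrow> fst (B l) = fst (B l') \<longleftrightarrow> l = l'"
  unfolding RR_iff using strict_mono_eq by blast

lemma substructure_A_mono: "k \<le> l \<Longrightarrow> j < Jk J k \<Longrightarrow> substructure (A k j) (A l j)"
proof (induction l rule: dec_induct)
  case base
  then show ?case using wf_A substructure_refl by blast
next
  case (step m)
  then have "j < Jk J m" using Jk_mono[of k m J] by simp
  with step show ?case using substructure_A_Suc substructure_trans by blast
qed

lemma is_block_wf: "is_block k c \<Longrightarrow> j < Jk J k \<Longrightarrow> wf_str (snd c ! j)"
  unfolding is_block_def binom_def substructure_def by auto

lemma sub_block_is_block:
  assumes "is_block l e" "sub_block k c e" "length (snd c) = Jk J k" "k \<le> l"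
  shows "is_block k c"
  unfolding is_block_def
proof (intro conjI allI impI)
  fix j assume j: "j < Jk J k"
  then have "snd e ! j \<in> binom (A (fst e) j) (A l j)"
    using assms(1,4) Jk_mono[of k l J] by (simp add: is_block_def)
  moreover have "snd c ! j \<in> binom (snd e ! j) (A k j)" "fst c = fst e"
    using assms(2) j by (simp_all add: sub_block_def)
  ultimately show "snd c ! j \<in> binom (A (fst c) j) (A k j)"
    unfolding binom_def using substructure_trans by auto
qed (use assms in auto)

lemma sub_block_refl: "is_block k c \<Longrightarrow> sub_block k c c"
  using is_block_wf[of k c] substructure_refl by (simp add: sub_block_def binom_def is_block_def)

lemma sub_block_trans:
  assumes "sub_block k c d" "sub_block m d e" "k \<le> m"
  shows "sub_block k c e"
  unfolding sub_block_def
proof (intro conjI allI impI)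
  show "fst c = fst e" using assms by (simp add: sub_block_def)
  fix j assume "j < Jk J k"
  moreover from this have "j < Jk J m" using Jk_mono[OF assms(3), of J] by simp
  ultimately show "snd c ! j \<in> binom (snd e ! j) (A k j)"
    using assms(1,2) binom_trans unfolding sub_block_def by blast
qed

lemma sub_block_exists:
  assumes "is_block l e" "k \<le> l"
  shows "\<exists>c. is_block k c \<and> sub_block k c e"
proof -
  have nonempty: "binom (snd e ! j) (A k j) \<noteq> {}" if "j < Jk J k" for j
  proof -
    have "snd e ! j \<in> binom (A (fst e) j) (A l j)"
      using assms that Jk_mono[of k l J] by (simp add: is_block_def)
    then show ?thesis
      using binom_nonempty substructure_A_mono[OF assms(2) that] by (auto simp: binom_def substructure_def)
  qed
  define c where "c = (fst e, map (\<lambda>j. SOME E. E \<in> binom (snd e ! j) (A k j)) [0..<Jk J k])"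
  then have "sub_block k c e"
    unfolding sub_block_def using nonempty by (simp add: some_in_eq)
  moreover have "length (snd c) = Jk J k"
    by (simp add: c_def)
  ultimately show ?thesis
    using sub_block_is_block[OF assms(1) _ _ assms(2)] by blast
qed

lemma leR_index:
  assumes "C \<in> R" "B \<in> R" "leq C B"
  obtains ix where "strict_mono ix" "\<And>k. sub_block k (C k) (B (ix k))"
proof -
  obtain ix where ix: "\<And>k. sub_block k (C k) (B (ix k))"
    using assms(3) leR_iff by metis
  have "strict_mono ix"
  proof (rule strict_monoI)
    fix x y :: nat assume "x < y"
    then have "fst (B (ix x)) < fst (B (ix y))"
      using ix RR_fst_less[OF assms(1)] by (simp add: sub_block_def)
    then show "ix x < ix y" using RR_fst_less[OF assms(2)] by blast
  qed
  with ix that show ?thesis by blast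
qed

lemma sub_block_index_ge:
  assumes "C \<in> R" "B \<in> R" "leq C B" "sub_block k (C k) (B l)"
  shows "k \<le> l"
proof -
  obtain ix where ix: "strict_mono ix" "\<And>k. sub_block k (C k) (B (ix k))"
    using leR_index assms(1-3) by blast
  then have "l = ix k"
    using assms(4) RR_fst_eq[OF assms(2)] by (simp add: sub_block_def)
  then show ?thesis using strict_mono_imp_increasing[OF ix(1)] by simp
qed

lemma leR_refl: "B \<in> R \<Longrightarrow> leq B B"
  unfolding leR_iff using sub_block_refl RR_block by blast

lemma leR_trans:
  assumes "C \<in> R" "B \<in> R" "leq C B" "leq B D"
  shows "leq C D"
  unfolding leR_iff
proof
  fix k
  obtain l where l: "sub_block k (C k) (B l)" using assms(3) leR_iff by blast
  obtain m where m: "sub_block l (B l) (D m)" using assms(4) leR_iff by blast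
  have "k \<le> l" using sub_block_index_ge assms l by blast
  with l m show "\<exists>m. sub_block k (C k) (D m)" using sub_block_trans by blast
qed

lemma basic_iff: "Y \<in> bs a X \<longleftrightarrow> Y \<in> R \<and> leq Y X \<and> rn (length a) Y = a"
proof
  assume "Y \<in> bs a X"
  then obtain n where "Y \<in> R" "leq Y X" "rn n Y = a" by (auto simp: basic_def)
  then show "Y \<in> R \<and> leq Y X \<and> rn (length a) Y = a" by auto
next
  assume "Y \<in> R \<and> leq Y X \<and> rn (length a) Y = a"
  then show "Y \<in> bs a X" unfolding basic_def by blast
qed

lemma basic_mono: "X \<in> R \<Longrightarrow> Y \<in> R \<Longrightarrow> leq Y X \<Longrightarrow> bs b Y \<subseteq> bs b X"
  using leR_trans unfolding basic_iff subset_iff by blast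

lemma basic_self: "C \<in> bs a B \<Longrightarrow> C \<in> bs a C"
  using leR_refl by (auto simp: basic_iff)

lemma basic_rn_mono: "n \<le> n' \<Longrightarrow> bs (rn n' W) X \<subseteq> bs (rn n W) X"
  by (auto simp: basic_iff rn_eq_iff)

lemma select_blocks:
  assumes mono: "strict_mono (\<lambda>k. fst (E k))"
    and blocks: "\<And>k. is_block (lev k) (E k)" and lev: "\<And>k. k \<le> lev k"
  obtains X where "X \<in> R" "\<And>k. sub_block k (X k) (E k)" "\<And>k. lev k = k \<Longrightarrow> X k = E k"
proof -
  define X where "X k = (if lev k = k then E k else SOME c. is_block k c \<and> sub_block k c (E k))" for k
  have X: "is_block k (X k) \<and> sub_block k (X k) (E k)" for k
  proof (cases "lev k = k")
    case True
    then show ?thesis using blocks[of k] sub_block_refl by (simp add: X_def)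
  next
    case False
    then show ?thesis
      using someI_ex[OF sub_block_exists[OF blocks lev]] by (simp add: X_def)
  qed
  then have "fst (X k) = fst (E k)" for k
    by (simp add: sub_block_def)
  with mono X have "X \<in> R"
    by (simp add: RR_iff)
  moreover have "X k = E k" if "lev k = k" for k
    using that by (simp add: X_def)
  ultimately show ?thesis
    using X that by blast
qed

lemma extend_prefix:
  assumes B: "B \<in> R" and C: "C \<in> R" and below: "\<forall>k<p. \<exists>l<N. sub_block k (C k) (B l)"
  obtains X where "X \<in> R" "rn p X = rn p C" "leq X B"
proof -
  define E where "E k = (if k < p then C k else B (N + k))" for k
  define lev where "lev k = (if k < p then k else N + k)" for k
  have "fst (E k) < fst (E (Suc k))" for k
  proof -
    consider "Suc k < p" | "Suc k = p" | "p \<le> k" by linarith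
    then show ?thesis
    proof cases
      case 2
      then obtain l where "l < N" "sub_block k (C k) (B l)" using below by blast
      with 2 show ?thesis using RR_fst_less[OF B] by (simp add: E_def sub_block_def)
    qed (use RR_fst_less[OF B] RR_fst_less[OF C] in \<open>simp_all add: E_def\<close>)
  qed
  then have "strict_mono (\<lambda>k. fst (E k))"
    by (simp add: strict_mono_Suc_iff)
  moreover have "is_block (lev k) (E k)" "k \<le> lev k" for k
    using RR_block[OF B] RR_block[OF C] by (simp_all add: E_def lev_def)
  ultimately obtain X where X: "X \<in> R" "\<And>k. sub_block k (X k) (E k)" "\<And>k. lev k = k \<Longrightarrow> X k = E k"
    using select_blocks by blast
  have "rn p X = rn p C"
    using X(3) by (simp add: rn_eq_iff lev_def E_def)
  moreover have "leq X B"
    unfolding leR_iff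
  proof
    fix k show "\<exists>l. sub_block k (X k) (B l)"
      using X(2,3)[of k] below by (cases "k < p") (auto simp: E_def lev_def)
  qed
  ultimately show ?thesis using X(1) that by blast
qed

lemma splice_prefix:
  assumes X: "X \<in> R" and Y: "Y \<in> R" and XY: "leq X Y"
  shows "(\<lambda>k. if k < e then Y k else X k) \<in> R" and "leq (\<lambda>k. if k < e then Y k else X k) Y"
proof -
  obtain ix where ix: "strict_mono ix" "\<And>k. sub_block k (X k) (Y (ix k))"
    using leR_index[OF X Y XY] by blast
  let ?S = "\<lambda>k. if k < e then Y k else X k"
  have "fst (?S k) < fst (?S (Suc k))" for k
  proof -
    consider "Suc k < e" | "Suc k = e" | "e \<le> k" by linarith
    then show ?thesis
    proof cases
      case 2
      have "k < ix (Suc k)" using strict_mono_imp_increasing[OF ix(1), of "Suc k"] by simp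
      with 2 show ?thesis using ix(2)[of "Suc k"] RR_fst_less[OF Y] by (simp add: sub_block_def)
    qed (use RR_fst_less[OF Y] RR_fst_less[OF X] in simp_all)
  qed
  with X Y show "?S \<in> R"
    by (simp add: RR_iff strict_mono_Suc_iff)
  show "leq ?S Y"
    unfolding leR_iff using ix(2) sub_block_refl[OF RR_block[OF Y]] by (metis (full_types))
qed

lemma fusion:
  assumes R: "\<And>n. Bs n \<in> R" and le: "\<And>n. leq (Bs (Suc n)) (Bs n)"
    and agree: "\<And>n. rn (c + n) (Bs (Suc n)) = rn (c + n) (Bs n)"
  obtains L where "L \<in> R" "\<And>n. leq L (Bs n)" "\<And>n. rn (c + n) L = rn (c + n) (Bs n)"
proof -
  have stable: "Bs m k = Bs n k" if "n \<le> m" "k < c + n" for m n k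
    using that(1)
  proof (induction m rule: dec_induct)
    case (step m)
    then show ?case using that agree[of m] by (simp add: rn_eq_iff)
  qed simp
  have below: "leq (Bs m) (Bs n)" if "n \<le> m" for m n
    using that
  proof (induction m rule: dec_induct)
    case (step m)
    then show ?case using R le leR_trans by blast
  qed (use R leR_refl in blast)
  define L where "L k = Bs (Suc k) k" for k
  have L: "L k = Bs m k" if "k < m" for k m
    using stable[of "Suc k" m k] that by (simp add: L_def)
  have "fst (L k) < fst (L (Suc k))" for k
    using L[of k "Suc (Suc k)"] L[of "Suc k" "Suc (Suc k)"] RR_fst_less[OF R] by simp
  then have LR: "L \<in> R"
    using R by (simp add: RR_iff strict_mono_Suc_iff L_def)
  have "leq L (Bs n)" for n
    unfolding leR_iff
  proof
    fix k
    have "L k = Bs (max n (Suc k)) k" using L by simp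
    then show "\<exists>l. sub_block k (L k) (Bs n l)"
      using below[of n "max n (Suc k)"] leR_iff by (metis max.cobounded1)
  qed
  moreover have "rn (c + n) L = rn (c + n) (Bs n)" for n
    unfolding rn_eq_iff
  proof (intro allI impI)
    fix k assume "k < c + n"
    then show "L k = Bs n k"
      using L[of k "max n (Suc k)"] stable[of n "max n (Suc k)" k] by simp
  qed
  ultimately show ?thesis using LR that by blast
qed

text \<open>\<open>has_depth Y b e\<close>: \<open>b\<close> is realised below \<open>Y\<close> and its last block lies in \<open>Y (e - 1)\<close>, so that
  \<open>e\<close> is the depth of \<open>b\<close> in \<open>Y\<close> (\<open>depth_eq\<close>).\<close>

definition has_depth :: "seqR \<Rightarrow> block list \<Rightarrow> nat \<Rightarrow> bool" where
  "has_depth Y b e \<longleftrightarrow> bs b Y \<noteq> {} \<and>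
     (if b = [] then e = 0 else 0 < e \<and> fst (last b) = fst (Y (e - 1)))"

lemma basic_last: "Z \<in> bs b Y \<Longrightarrow> b \<noteq> [] \<Longrightarrow> last b = Z (length b - 1)"
  using last_rn[of "length b" Z] by (simp add: basic_iff)

lemma has_depth_exists:
  assumes Y: "Y \<in> R" and ne: "bs b Y \<noteq> {}"
  obtains e where "has_depth Y b e"
proof (cases "b = []")
  case True
  with ne that show ?thesis by (simp add: has_depth_def)
next
  case False
  obtain Z where Z: "Z \<in> bs b Y" using ne by blast
  then have "leq Z Y" by (simp add: basic_iff)
  then obtain l where "sub_block (length b - 1) (Z (length b - 1)) (Y l)"
    using leR_iff by blast
  then have "fst (last b) = fst (Y (Suc l - 1))"
    using basic_last[OF Z False] by (simp add: sub_block_def)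
  with False ne show ?thesis using that[of "Suc l"] by (simp add: has_depth_def)
qed

lemma has_depth_blocks:
  assumes Y: "Y \<in> R" and Z: "Z \<in> bs b Y" and d: "has_depth Y b e" and k: "k < length b"
  shows "\<exists>l<e. sub_block k (Z k) (Y l)"
proof -
  have ZR: "Z \<in> R" "leq Z Y" using Z by (auto simp: basic_iff)
  obtain l where l: "sub_block k (Z k) (Y l)" using ZR(2) leR_iff by blast
  have "b \<noteq> []" using k by auto
  with Z d have "fst (Z (length b - 1)) = fst (Y (e - 1))" "0 < e"
    using basic_last by (auto simp: has_depth_def)
  moreover have "fst (Z k) \<le> fst (Z (length b - 1))"
    using RR_fst_le[OF ZR(1)] k by simp
  ultimately have "l \<le> e - 1" "0 < e"
    using l RR_fst_le[OF Y] by (auto simp: sub_block_def)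
  with l show ?thesis by (intro exI[of _ l]) auto
qed

lemma next_block_index_ge:
  assumes X: "X \<in> R" and d: "has_depth X b e" and Z: "Z \<in> bs b X"
    and l: "sub_block (length b) (Z (length b)) (X l)"
  shows "e \<le> l"
proof (cases "b = []")
  case True
  with d show ?thesis by (simp add: has_depth_def)
next
  case False
  have "Z \<in> R" using Z by (simp add: basic_iff)
  then have "fst (Z (length b - 1)) < fst (Z (length b))"
    using RR_fst_less False by simp
  then have "fst (X (e - 1)) < fst (X l)"
    using basic_last[OF Z False] d False l by (simp add: has_depth_def sub_block_def)
  with d False show ?thesis using RR_fst_less[OF X] by (simp add: has_depth_def)
qed

lemma has_depth_mono:
  assumes Y: "Y \<in> R" and d: "has_depth Y b e" and X: "X \<in> R" "leq X Y" "rn e X = rn e Y"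
  shows "has_depth X b e"
proof -
  obtain Z where Z: "Z \<in> bs b Y" using d by (auto simp: has_depth_def)
  have "\<forall>k<length b. \<exists>l<e. sub_block k (Z k) (X l)"
    using has_depth_blocks[OF Y Z d] X(3) unfolding rn_eq_iff by metis
  then obtain C where "C \<in> R" "rn (length b) C = rn (length b) Z" "leq C X"
    using extend_prefix[OF X(1)] Z by (metis basic_iff)
  then have "C \<in> bs b X" using Z by (simp add: basic_iff)
  moreover have "0 < e \<Longrightarrow> X (e - 1) = Y (e - 1)" using X(3) by (simp add: rn_eq_iff)
  ultimately show ?thesis using d by (auto simp: has_depth_def)
qed

lemma shrink_fixing_depth:
  assumes Y: "Y \<in> R" and d: "has_depth Y b e" and X: "X \<in> R" "leq X Y" and ne: "bs b X \<noteq> {}"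
  obtains X' where "X' \<in> R" "leq X' Y" "rn e X' = rn e Y" "bs b X' \<subseteq> bs b X"
proof -
  define X' where "X' k = (if k < e then Y k else X k)" for k
  have X'R: "X' \<in> R" and X'Y: "leq X' Y"
    using splice_prefix[OF X(1) Y X(2)] unfolding X'_def by blast+
  obtain V where V: "V \<in> bs b X" using ne by blast
  have "leq W X" if W: "W \<in> bs b X'" for W
    unfolding leR_iff
  proof
    fix k
    have WR: "W \<in> R" "leq W X'" using W by (auto simp: basic_iff)
    obtain l where l: "sub_block k (W k) (X' l)" using WR(2) leR_iff by blast
    show "\<exists>l. sub_block k (W k) (X l)"
    proof (cases "e \<le> l")
      case True
      with l show ?thesis by (auto simp: X'_def)
    next
      case False
      have "k < length b"
      proof (rule ccontr)
        assume "\<not> k < length b"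
        moreover have "b \<noteq> []" using False d by (auto simp: has_depth_def)
        ultimately have "length b - 1 < k" by (cases b) auto
        then have "fst (W (length b - 1)) < fst (W k)"
          using RR_fst_less[OF WR(1)] by blast
        then have "fst (Y (e - 1)) < fst (Y l)"
          using basic_last[OF W \<open>b \<noteq> []\<close>] \<open>b \<noteq> []\<close> d l False by (simp add: has_depth_def sub_block_def X'_def)
        with False show False using RR_fst_less[OF Y] by simp
      qed
      then have "W k = V k"
        using W V by (metis basic_iff rn_nth)
      then show ?thesis using V leR_iff by (metis basic_iff)
    qed
  qed
  then have "bs b X' \<subseteq> bs b X"
    by (auto simp: basic_iff)
  moreover have "rn e X' = rn e Y"
    by (simp add: rn_eq_iff X'_def)
  ultimately show ?thesis using X'R X'Y that by blast
qed

end

section \<open>One-step homogeneity\<close>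

lemma infinite_monochromatic_subsequence:
  fixes col :: "nat \<Rightarrow> bool"
  obtains s cc where "strict_mono (s :: nat \<Rightarrow> nat)" "\<And>i. col (s i) = cc"
proof -
  obtain cc where T: "infinite {t. col t = cc}"
  proof -
    have "{t. col t = True} \<union> {t. col t = False} = UNIV" by auto
    then have "\<not> (finite {t. col t = True} \<and> finite {t. col t = False})"
      by (metis finite_Un infinite_UNIV_nat)
    with that show ?thesis by blast
  qed
  have "strict_mono (enumerate {t. col t = cc})"
    using enumerate_mono[OF _ T] by (simp add: strict_mono_def)
  moreover have "col (enumerate {t. col t = cc} i) = cc" for i
    using enumerate_in_set[OF T] by simp
  ultimately show ?thesis by (rule that)
qed

lemma binom_pullback:
  assumes h: "embedding h N E" and E: "wf_str E" and B: "substructure B N"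
    and c: "c \<in> binom (induced E (h ` univ B)) P"
  defines "S \<equiv> {x \<in> univ B. h x \<in> univ c}"
  shows "induced N S \<in> binom B P" and "induced E (h ` S) = c"
proof -
  have c_sub: "substructure c (induced E (h ` univ B))" and c_iso: "isomorphic c P"
    using c by (auto simp: binom_def)
  have "univ B \<noteq> {}" "univ B \<subseteq> univ N"
    using B by (auto simp: substructure_def wf_str_def)
  then have "substructure (induced E (h ` univ B)) E"
    using h E by (intro substructure_induced) (auto simp: embedding_def)
  then have cE: "substructure c E"
    using c_sub substructure_trans by blast
  have "univ c \<subseteq> h ` univ B"
    using c_sub by (simp add: substructure_def)
  then have hS: "h ` S = univ c"
    by (auto simp: S_def)
  then show cS: "induced E (h ` S) = c"
    using substructure_eq_induced[OF cE] by simp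
  have "S \<noteq> {}"
    using hS cE by (auto simp: substructure_def wf_str_def)
  moreover have "S \<subseteq> univ B" by (auto simp: S_def)
  moreover have "induced N S = induced B S"
    using substructure_eq_induced[OF B] induced_induced calculation(2) by metis
  ultimately have sub_B: "substructure (induced N S) B"
    using substructure_induced B by (simp add: substructure_def)
  have "embedding h (induced N S) E"
    by (rule embedding_substructure[OF substructure_trans[OF sub_B B] h])
  then have "isomorphic c (induced N S)"
    using embedding_image_in_binom E \<open>S \<noteq> {}\<close> cS by (fastforce simp: binom_def)
  then have "isomorphic (induced N S) P"
    using isomorphic_sym isomorphic_trans c_iso by blast
  with sub_B show "induced N S \<in> binom B P"
    by (simp add: binom_def)
qed

context block_space begin

lemma embedding_into_block:
  assumes "is_block l e" "n \<le> l" "j < Jk J n"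
  shows "\<exists>h. embedding h (A n j) (snd e ! j)"
proof -
  have "snd e ! j \<in> binom (A (fst e) j) (A l j)"
    using assms Jk_mono[of n l J] by (simp add: is_block_def)
  then have "isomorphic (A l j) (snd e ! j)"
    using isomorphic_sym by (simp add: binom_def)
  then obtain g where "embedding g (A l j) (snd e ! j)"
    by (auto simp: isomorphic_def)
  then show ?thesis
    using embedding_substructure substructure_A_mono[OF assms(2,3)] by blast
qed

lemma sub_block_extending:
  assumes e0: "is_block l e0" "m \<le> l" and q: "q \<le> Jk J m"
    and F: "\<And>j. j < q \<Longrightarrow> F j \<in> binom (snd e0 ! j) (A m j)"
  obtains M where "is_block m M" "sub_block m M e0" "\<And>j. j < q \<Longrightarrow> snd M ! j = F j"
proof -
  obtain c where c: "sub_block m c e0"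
    using sub_block_exists[OF e0] by blast
  define M where "M = (fst e0, map (\<lambda>j. if j < q then F j else snd c ! j) [0..<Jk J m])"
  have "sub_block m M e0"
    using c F q by (auto simp: sub_block_def M_def)
  moreover from this have "is_block m M"
    using sub_block_is_block[OF e0(1) _ _ e0(2)] by (simp add: M_def)
  moreover have "snd M ! j = F j" if "j < q" for j
    using that q by (simp add: M_def)
  ultimately show ?thesis using that by blast
qed

text \<open>The arrow relation is transported into the block along embeddings of the \<open>A n j\<close>.\<close>

lemma monochromatic_sub_block:
  fixes Q :: "block \<Rightarrow> bool"
  assumes e0: "is_block l e0" and pm: "p < m" and mn: "m < n" and nl: "n \<le> l"
    and arr: "arrow (Jk J p) (A n) (A m) (A p)"
  obtains M col where "is_block m M" "sub_block m M e0"
    "\<And>c. is_block p c \<Longrightarrow> sub_block p c M \<Longrightarrow> Q c = col"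
proof -
  define E where "E j = snd e0 ! j" for j
  have J: "Jk J p \<le> Jk J m" "Jk J m \<le> Jk J n" "Jk J n \<le> Jk J l"
    using pm mn nl Jk_mono by (auto simp: less_imp_le)
  have E_wf: "wf_str (E j)" if "j < Jk J l" for j
    using is_block_wf[OF e0 that] by (simp add: E_def)
  define h where "h j = (SOME h. embedding h (A n j) (E j))" for j
  have h: "embedding (h j) (A n j) (E j)" if "j < Jk J n" for j
    using someI_ex[OF embedding_into_block[OF e0 nl that]] by (simp add: h_def E_def)
  define im where "im j S = induced (E j) (h j ` S)" for j S
  define colour where "colour Ds = Q (fst e0, map (\<lambda>j. im j (univ (Ds ! j))) [0..<Jk J p])" for Ds :: "ostr list"
  obtain Bs c0 where Bs: "Bs \<in> seq_binom (Jk J p) (A n) (A m)"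
    and mono: "\<And>Ds. Ds \<in> seq_binom (Jk J p) (\<lambda>j. Bs ! j) (A p) \<Longrightarrow> colour Ds = c0"
    using arr[unfolded arrow_def, THEN spec, of colour] by blast
  have Bs_j: "Bs ! j \<in> binom (A n j) (A m j)" if "j < Jk J p" for j
    using Bs that by (simp add: seq_binom_def)
  have Bs_sub: "substructure (Bs ! j) (A n j)" if "j < Jk J p" for j
    using Bs_j[OF that] by (simp add: binom_def)
  have im_Bs: "im j (univ (Bs ! j)) \<in> binom (E j) (A m j)" if j: "j < Jk J p" for j
  proof -
    have "embedding (h j) (Bs ! j) (E j)"
      using embedding_substructure[OF Bs_sub[OF j] h] j J by simp
    moreover have "univ (Bs ! j) \<noteq> {}"
      using Bs_sub[OF j] by (simp add: substructure_def wf_str_def)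
    ultimately have "im j (univ (Bs ! j)) \<in> binom (E j) (Bs ! j)"
      unfolding im_def using embedding_image_in_binom E_wf j J by simp
    then show ?thesis
      using Bs_j[OF j] binom_isomorphic by (simp add: binom_def)
  qed
  obtain M where M: "is_block m M" "sub_block m M e0"
    and M_j: "\<And>j. j < Jk J p \<Longrightarrow> snd M ! j = im j (univ (Bs ! j))"
    using sub_block_extending[OF e0 _ J(1), of "\<lambda>j. im j (univ (Bs ! j))"] im_Bs mn nl
    unfolding E_def by auto
  have "Q c = c0" if c: "is_block p c" "sub_block p c M" for c
  proof -
    have c_j: "snd c ! j \<in> binom (im j (univ (Bs ! j))) (A p j)" if "j < Jk J p" for j
      using c(2) that M_j by (simp add: sub_block_def)
    define S where "S j = {x \<in> univ (Bs ! j). h j x \<in> univ (snd c ! j)}" for j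
    define Ds where "Ds = map (\<lambda>j. induced (A n j) (S j)) [0..<Jk J p]"
    have pull: "induced (A n j) (S j) \<in> binom (Bs ! j) (A p j)" "im j (S j) = snd c ! j"
      if "j < Jk J p" for j
      using binom_pullback[OF h E_wf Bs_sub c_j[unfolded im_def]] that J
      by (simp_all add: S_def im_def)
    then have "Ds \<in> seq_binom (Jk J p) (\<lambda>j. Bs ! j) (A p)"
      by (simp add: seq_binom_def Ds_def)
    moreover have "colour Ds = Q c"
    proof -
      have "map (\<lambda>j. im j (univ (Ds ! j))) [0..<Jk J p] = snd c"
        using pull c(1) by (intro nth_equalityI) (auto simp: Ds_def is_block_def)
      moreover have "fst c = fst e0" using c(2) M(2) by (simp add: sub_block_def)
      ultimately show ?thesis by (simp add: colour_def) (metis prod.collapse)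
    qed
    ultimately show ?thesis using mono by simp
  qed
  with M show ?thesis by (rule that)
qed

lemma monochromatic_sub_blocks:
  fixes Q :: "block \<Rightarrow> bool" and lev :: "nat \<Rightarrow> nat"
  assumes Y: "Y \<in> R" and lev: "\<And>t. p < lev t"
  obtains g M col where "strict_mono g" "\<And>t. e \<le> g t" "\<And>t. is_block (lev t) (M t)"
    "\<And>t. sub_block (lev t) (M t) (Y (g t))"
    "\<And>t c. is_block p c \<Longrightarrow> sub_block p c (M t) \<Longrightarrow> Q c = col t"
proof -
  define n where "n t = (SOME n. n > lev t \<and> arrow (Jk J p) (A n) (A (lev t)) (A p))" for t
  have n: "lev t < n t" "arrow (Jk J p) (A (n t)) (A (lev t)) (A p)" for t
    using someI_ex[OF arrow_A[OF lev[of t]]] by (simp_all add: n_def)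
  define g where "g t = e + t + (\<Sum>i\<le>t. n i)" for t
  have g: "strict_mono g" "n t \<le> g t" "e \<le> g t" for t
  proof -
    show "strict_mono g" by (simp add: strict_mono_Suc_iff g_def)
    have "n t \<le> (\<Sum>i\<le>t. n i)" by (rule member_le_sum) auto
    then show "n t \<le> g t" "e \<le> g t" by (simp_all add: g_def)
  qed
  define good where "good t Mc \<longleftrightarrow> is_block (lev t) (fst Mc) \<and> sub_block (lev t) (fst Mc) (Y (g t)) \<and>
      (\<forall>c. is_block p c \<longrightarrow> sub_block p c (fst Mc) \<longrightarrow> Q c = snd Mc)" for t Mc
  have "\<forall>t. \<exists>Mc. good t Mc"
  proof
    fix t
    obtain M0 c0 where "is_block (lev t) M0" "sub_block (lev t) M0 (Y (g t))"
      "\<And>c. is_block p c \<Longrightarrow> sub_block p c M0 \<Longrightarrow> Q c = c0"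
      using monochromatic_sub_block[OF RR_block[OF Y] lev n(1) g(2) n(2)] by blast
    then show "\<exists>Mc. good t Mc" unfolding good_def by (intro exI[of _ "(M0, c0)"]) simp
  qed
  then obtain Mc where Mc: "\<And>t. good t (Mc t)"
    using choice by blast
  define M where "M t = fst (Mc t)" for t
  define col where "col t = snd (Mc t)" for t
  have "is_block (lev t) (M t)" "sub_block (lev t) (M t) (Y (g t))" for t
    using Mc[of t] unfolding good_def M_def by blast+
  moreover have "Q c = col t" if "is_block p c" "sub_block p c (M t)" for t c
    using Mc[of t] that unfolding good_def M_def col_def by blast
  ultimately show ?thesis
    by (rule that[OF g(1) g(3)])
qed

lemma assemble_behind_prefix:
  assumes Y: "Y \<in> R" and g: "strict_mono g" "\<And>t. e \<le> g t"
    and M: "\<And>t. is_block (lev t) (M t)" "\<And>t. sub_block (lev t) (M t) (Y (g t))" "\<And>t. e + t \<le> lev t"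
  obtains X where "X \<in> R" "leq X Y" "rn e X = rn e Y" "\<And>k. e \<le> k \<Longrightarrow> sub_block k (X k) (M (k - e))"
proof -
  define E where "E k = (if k < e then Y k else M (k - e))" for k
  define levE where "levE k = (if k < e then k else lev (k - e))" for k
  have fst_M: "fst (M t) = fst (Y (g t))" for t
    using M(2) by (simp add: sub_block_def)
  have "fst (E k) < fst (E (Suc k))" for k
  proof -
    consider "Suc k < e" | "Suc k = e" | "e \<le> k" by linarith
    then show ?thesis
    proof cases
      case 2
      then show ?thesis using g(2)[of 0] RR_fst_less[OF Y] fst_M by (simp add: E_def)
    next
      case 3
      then have "g (k - e) < g (Suc k - e)"
        using g(1) by (simp add: Suc_diff_le strict_mono_less)
      with 3 show ?thesis using RR_fst_less[OF Y] fst_M by (simp add: E_def)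
    qed (use RR_fst_less[OF Y] in \<open>simp add: E_def\<close>)
  qed
  moreover have "is_block (levE k) (E k)" "k \<le> levE k" for k
    using RR_block[OF Y] M(1) M(3)[of "k - e"] by (auto simp: E_def levE_def)
  ultimately obtain X where X: "X \<in> R" "\<And>k. sub_block k (X k) (E k)"
    "\<And>k. levE k = k \<Longrightarrow> X k = E k"
    using select_blocks[of E levE] by (metis strict_mono_Suc_iff)
  have X_M: "sub_block k (X k) (M (k - e))" if "e \<le> k" for k
    using X(2)[of k] that by (simp add: E_def)
  have X_Y: "k < e \<Longrightarrow> X k = Y k" for k
    using X(3) by (simp add: E_def levE_def)
  have "leq X Y"
    unfolding leR_iff
  proof
    fix k show "\<exists>l. sub_block k (X k) (Y l)"
    proof (cases "k < e")
      case True
      then show ?thesis using X_Y sub_block_refl[OF RR_block[OF Y]] by metis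
    next
      case False
      then have "k \<le> lev (k - e)" using M(3)[of "k - e"] by simp
      then show ?thesis using X_M M(2) False sub_block_trans by (meson not_less)
    qed
  qed
  moreover have "rn e X = rn e Y"
    using X_Y by (simp add: rn_eq_iff)
  ultimately show ?thesis
    using X(1) X_M that by blast
qed

text \<open>In infinitely many blocks of \<open>Y\<close> pick a sub-block on which the colour of the one-block
  extensions of \<open>b\<close> is constant, keep those of one colour, and assemble them behind the first
  \<open>e\<close> blocks of \<open>Y\<close>.\<close>

lemma homogeneous_one_step:
  fixes P :: "block list \<Rightarrow> bool"
  assumes Y: "Y \<in> R" and d: "has_depth Y b e"
  obtains X where "X \<in> R" "leq X Y" "rn e X = rn e Y"
    "(\<forall>Z\<in>bs b X. P (rn (Suc (length b)) Z)) \<or> (\<forall>Z\<in>bs b X. \<not> P (rn (Suc (length b)) Z))"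
proof -
  define p where "p = length b"
  define lev where "lev t = e + p + t + 1" for t
  define Q where "Q c \<longleftrightarrow> P (b @ [c])" for c
  have "p < lev t" for t by (simp add: lev_def)
  then obtain g M col where g: "strict_mono g" "\<And>t. e \<le> g t"
    and M: "\<And>t. is_block (lev t) (M t)" "\<And>t. sub_block (lev t) (M t) (Y (g t))"
    and col: "\<And>t c. is_block p c \<Longrightarrow> sub_block p c (M t) \<Longrightarrow> Q c = col t"
    by (rule monochromatic_sub_blocks[OF Y, where e = e and Q = Q]) (rule that)
  obtain s cc where s: "strict_mono (s :: nat \<Rightarrow> nat)" "\<And>i. col (s i) = cc"
    using infinite_monochromatic_subsequence[of col] by blast
  define gs where "gs = g \<circ> s"
  define Ms where "Ms = M \<circ> s"
  define levs where "levs = lev \<circ> s"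
  have "strict_mono gs" "e \<le> gs t" "is_block (levs t) (Ms t)" "sub_block (levs t) (Ms t) (Y (gs t))"
    "e + t \<le> levs t" for t
    using strict_mono_o[OF g(1) s(1)] g(2) M strict_mono_imp_increasing[OF s(1), of t]
    by (simp_all add: gs_def Ms_def levs_def lev_def)
  then obtain X where X: "X \<in> R" "leq X Y" "rn e X = rn e Y"
    and X_M: "\<And>k. e \<le> k \<Longrightarrow> sub_block k (X k) (Ms (k - e))"
    by (rule assemble_behind_prefix[OF Y]) (rule that)
  have dX: "has_depth X b e"
    using has_depth_mono[OF Y d X] .
  have "P (rn (Suc (length b)) Z) = cc" if Z: "Z \<in> bs b X" for Z
  proof -
    have ZR: "Z \<in> R" "leq Z X" "rn p Z = b" using Z by (auto simp: basic_iff p_def)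
    obtain l where l: "sub_block p (Z p) (X l)" using ZR(2) leR_iff by blast
    have "e \<le> l" using next_block_index_ge[OF X(1) dX Z] l by (simp add: p_def)
    moreover have "p \<le> l" using sub_block_index_ge[OF ZR(1) X(1) ZR(2) l] .
    ultimately have "sub_block p (Z p) (M (s (l - e)))"
      using sub_block_trans[OF l X_M] by (simp add: Ms_def)
    then have "P (b @ [Z p]) = cc"
      using col RR_block[OF ZR(1)] s(2) by (metis Q_def)
    then show ?thesis using ZR(3) by (simp add: rn_Suc p_def)
  qed
  then show ?thesis
    using that[OF X] by (cases cc) auto
qed

section \<open>Diagonal fusion\<close>

lemma finite_block_lists:
  "finite {b. length b \<le> N \<and> (\<forall>k<length b. is_block k (b ! k) \<and> k \<le> fst (b ! k) \<and> fst (b ! k) \<le> M)}"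
proof -
  define S where "S = (\<Union>n\<le>M. \<Union>j<Jk J n. {D. substructure D (A n j)})"
  define BL where "BL = {..M} \<times> {xs. set xs \<subseteq> S \<and> length xs \<le> Jk J M}"
  have "finite S"
    unfolding S_def using finite_substructures finite_A by auto
  then have "finite BL"
    unfolding BL_def using finite_lists_length_le by blast
  moreover have mem_BL: "c \<in> BL" if c: "is_block k c" "k \<le> fst c" "fst c \<le> M" for k c
  proof -
    have "set (snd c) \<subseteq> S"
    proof
      fix D assume "D \<in> set (snd c)"
      then obtain j where j: "j < Jk J k" "D = snd c ! j"
        using c(1) by (auto simp: is_block_def in_set_conv_nth)
      then have "j < Jk J (fst c)" "substructure D (A (fst c) j)"
        using c Jk_mono[of k "fst c" J] by (auto simp: is_block_def binom_def)
      then show "D \<in> S"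
        unfolding S_def using c(3) by blast
    qed
    moreover have "length (snd c) \<le> Jk J M"
      using c Jk_mono[of k M J] by (simp add: is_block_def)
    ultimately show ?thesis
      unfolding BL_def using c(3) by (cases c) auto
  qed
  ultimately have "finite {b. set b \<subseteq> BL \<and> length b \<le> N}"
    using finite_lists_length_le by blast
  moreover have "{b. length b \<le> N \<and> (\<forall>k<length b. is_block k (b ! k) \<and> k \<le> fst (b ! k) \<and> fst (b ! k) \<le> M)}
      \<subseteq> {b. set b \<subseteq> BL \<and> length b \<le> N}"
  proof clarify
    fix b x
    assume b: "length b \<le> N" "\<forall>k<length b. is_block k (b ! k) \<and> k \<le> fst (b ! k) \<and> fst (b ! k) \<le> M"
      and "x \<in> set b"
    then obtain k where "k < length b" "x = b ! k" by (auto simp: in_set_conv_nth)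
    with b show "x \<in> BL" using mem_BL by blast
  qed
  ultimately show ?thesis
    using finite_subset by blast
qed

definition ext_level :: "block list \<Rightarrow> nat \<Rightarrow> nat \<Rightarrow> seqR \<Rightarrow> block list set" where
  "ext_level a d i X = (if i = 0 then {a} else
     {rn q Z | Z q. Z \<in> bs a X \<and> length a < q \<and> fst (Z (q - 1)) = fst (X (d + i - 1))})"

lemma ext_level_finite:
  assumes X: "X \<in> R"
  shows "finite (ext_level a d i X)"
proof (cases "i = 0")
  case False
  define M where "M = fst (X (d + i - 1))"
  have "ext_level a d i X \<subseteq>
      {b. length b \<le> Suc M \<and> (\<forall>k<length b. is_block k (b ! k) \<and> k \<le> fst (b ! k) \<and> fst (b ! k) \<le> M)}"
  proof
    fix b assume "b \<in> ext_level a d i X"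
    then obtain Z q where Z: "Z \<in> R" "b = rn q Z" "0 < q" "fst (Z (q - 1)) = M"
      using False by (auto simp: ext_level_def basic_iff M_def)
    have "strict_mono (\<lambda>k. fst (Z k))" using Z(1) by (simp add: RR_iff)
    then have ge: "k \<le> fst (Z k)" for k
      using strict_mono_imp_increasing by blast
    have le: "fst (Z k) \<le> M" if "k < q" for k
      using RR_fst_le[OF Z(1), of k "q - 1"] that Z(4) by simp
    have "q \<le> Suc M" using ge[of "q - 1"] le[of "q - 1"] Z(3) by simp
    then show "b \<in> {b. length b \<le> Suc M \<and> (\<forall>k<length b. is_block k (b ! k) \<and> k \<le> fst (b ! k) \<and> fst (b ! k) \<le> M)}"
      using Z(2) ge le RR_block[OF Z(1)] by simp
  qed
  then show ?thesis
    using finite_block_lists finite_subset by blast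
qed (simp add: ext_level_def)

lemma ext_level_prefix:
  "b \<in> ext_level a d i X \<Longrightarrow> length a \<le> length b \<and> take (length a) b = a"
  by (auto simp: ext_level_def basic_iff take_rn split: if_splits)

lemma ext_level_has_depth:
  assumes X: "X \<in> R" and d: "has_depth X a d" and b: "b \<in> ext_level a d i X"
  shows "has_depth X b (d + i)"
proof (cases "i = 0")
  case False
  then obtain Z q where Z: "Z \<in> bs a X" "b = rn q Z" "length a < q" "fst (Z (q - 1)) = fst (X (d + i - 1))"
    using b by (auto simp: ext_level_def)
  then have "Z \<in> bs b X" by (simp add: basic_iff)
  moreover have "b \<noteq> []"
    using Z(2,3) rn_length[of q Z] by (metis less_nat_zero_code list.size(3))
  ultimately show ?thesis using Z False by (auto simp: has_depth_def last_rn)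
qed (use b d in \<open>simp add: ext_level_def\<close>)

lemma extension_in_level:
  assumes C: "C \<in> R" "has_depth C a d" and Z: "Z \<in> bs a C" and q: "length a \<le> q"
  obtains i where "\<And>X. X \<in> R \<Longrightarrow> leq C X \<Longrightarrow> rn (d + i) C = rn (d + i) X \<Longrightarrow> rn q Z \<in> ext_level a d i X"
proof (cases "q = length a")
  case True
  then have "rn q Z = a" using Z by (simp add: basic_iff)
  with that[of 0] show ?thesis by (simp add: ext_level_def)
next
  case False
  have ZR: "Z \<in> R" "leq Z C" using Z by (auto simp: basic_iff)
  obtain ix where ix: "strict_mono ix" "\<And>k. sub_block k (Z k) (C (ix k))"
    using leR_index[OF ZR(1) C(1) ZR(2)] by blast
  define l where "l = ix (q - 1)"
  have "d \<le> ix (length a)"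
    using next_block_index_ge[OF C Z ix(2)] .
  moreover have "ix (length a) \<le> l"
    using strict_mono_less_eq[OF ix(1)] False q by (simp add: l_def)
  ultimately have dl: "d \<le> l" by simp
  have "rn q Z \<in> ext_level a d (Suc (l - d)) X"
    if X: "X \<in> R" "leq C X" "rn (d + Suc (l - d)) C = rn (d + Suc (l - d)) X" for X
  proof -
    have "C l = X l" using X(3) dl by (simp add: rn_eq_iff)
    then have "fst (Z (q - 1)) = fst (X (d + Suc (l - d) - 1))"
      using ix(2)[of "q - 1"] dl by (simp add: l_def sub_block_def)
    moreover have "Z \<in> bs a X"
      using ZR leR_trans[OF ZR(1) C(1) ZR(2) X(2)] Z by (simp add: basic_iff)
    moreover have "length a < q" using False q by simp
    ultimately show ?thesis by (auto simp: ext_level_def)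
  qed
  then show ?thesis using that by blast
qed

lemma fusion_iterate:
  assumes Y: "Y \<in> R"
    and step: "\<And>i X. X \<in> R \<Longrightarrow> leq X Y \<Longrightarrow> rn d X = rn d Y \<Longrightarrow>
      \<exists>X'\<in>R. leq X' X \<and> rn (d + i) X' = rn (d + i) X \<and> Q i X X'"
  obtains Bs C where "\<And>i. Q i (Bs i) (Bs (Suc i))" "C \<in> R" "leq C Y" "rn d C = rn d Y"
    "\<And>i. Bs i \<in> R" "\<And>i. leq C (Bs i)" "\<And>i. rn (d + i) C = rn (d + i) (Bs i)"
proof -
  define next_step where
    "next_step i X = (SOME X'. X' \<in> R \<and> leq X' X \<and> rn (d + i) X' = rn (d + i) X \<and> Q i X X')" for i X
  have next_step: "next_step i X \<in> R \<and> leq (next_step i X) X \<and>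
      rn (d + i) (next_step i X) = rn (d + i) X \<and> Q i X (next_step i X)"
    if "X \<in> R" "leq X Y" "rn d X = rn d Y" for i X
    using someI_ex[OF step[OF that, of i, unfolded Bex_def]] by (simp add: next_step_def)
  define Bs where "Bs = rec_nat Y next_step"
  have Bs_Suc: "Bs (Suc i) = next_step i (Bs i)" for i
    by (simp add: Bs_def)
  have inv: "Bs i \<in> R \<and> leq (Bs i) Y \<and> rn d (Bs i) = rn d Y" for i
  proof (induction i)
    case 0
    then show ?case using Y leR_refl by (simp add: Bs_def)
  next
    case (Suc i)
    then have "Bs (Suc i) \<in> R" "leq (Bs (Suc i)) (Bs i)" "rn (d + i) (Bs (Suc i)) = rn (d + i) (Bs i)"
      using next_step Bs_Suc by simp_all
    with Suc show ?case
      using leR_trans rn_eq_mono[of "d + i" "Bs (Suc i)" "Bs i" d] by auto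
  qed
  have steps: "Bs (Suc i) \<in> R" "leq (Bs (Suc i)) (Bs i)"
      "rn (d + i) (Bs (Suc i)) = rn (d + i) (Bs i)" "Q i (Bs i) (Bs (Suc i))" for i
    using next_step[of "Bs i" i] inv[of i] Bs_Suc by simp_all
  obtain C where C: "C \<in> R" "\<And>i. leq C (Bs i)" "\<And>i. rn (d + i) C = rn (d + i) (Bs i)"
    using fusion[of Bs d] inv steps by blast
  have "Bs 0 = Y" by (simp add: Bs_def)
  with C have "leq C Y" "rn d C = rn d Y"
    using C(2)[of 0] C(3)[of 0] by simp_all
  with C inv steps(4) that show ?thesis by blast
qed

lemma fix_finitely_many:
  assumes X: "X \<in> R" and F: "finite F" "\<forall>b\<in>F. has_depth X b e"
    and one: "\<And>X' b. X' \<in> R \<Longrightarrow> leq X' X \<Longrightarrow> b \<in> F \<Longrightarrow> has_depth X' b e \<Longrightarrow>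
      \<exists>X''\<in>R. leq X'' X' \<and> rn e X'' = rn e X' \<and> G b X''"
    and mono: "\<And>b X' X''. G b X' \<Longrightarrow> X' \<in> R \<Longrightarrow> X'' \<in> R \<Longrightarrow> leq X'' X' \<Longrightarrow> G b X''"
  shows "\<exists>X'\<in>R. leq X' X \<and> rn e X' = rn e X \<and> (\<forall>b\<in>F. G b X')"
proof -
  have "\<exists>X'\<in>R. leq X' X \<and> rn e X' = rn e X \<and> (\<forall>b\<in>F'. G b X')" if "F' \<subseteq> F" for F'
    using finite_subset[OF that F(1)] that
  proof (induction F' rule: finite_induct)
    case empty
    then show ?case using X leR_refl by blast
  next
    case (insert b F')
    then obtain X1 where X1: "X1 \<in> R" "leq X1 X" "rn e X1 = rn e X" "\<forall>b\<in>F'. G b X1"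
      by blast
    have "b \<in> F" using insert.prems by blast
    then have "has_depth X1 b e"
      using has_depth_mono[OF X _ X1(1-3)] F(2) by blast
    then obtain X2 where X2: "X2 \<in> R" "leq X2 X1" "rn e X2 = rn e X1" "G b X2"
      using one[OF X1(1,2) \<open>b \<in> F\<close>] by blast
    then have "\<forall>b\<in>insert b F'. G b X2"
      using X1(1,4) mono by blast
    moreover have "leq X2 X" using leR_trans X1 X2 by blast
    ultimately show ?case using X1 X2 by auto
  qed
  then show ?thesis by blast
qed

text \<open>The \<open>i\<close>-th step establishes \<open>P\<close> for the finitely many extensions at level \<open>i\<close>, while
  keeping the first \<open>d + i\<close> blocks; the fusion of all steps has \<open>P\<close> for every extension.\<close>

lemma diagonal_fusion:
  assumes Y: "Y \<in> R" "has_depth Y a d"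
    and step: "\<And>i X b. X \<in> R \<Longrightarrow> leq X Y \<Longrightarrow> has_depth X b (d + i) \<Longrightarrow>
      length a \<le> length b \<Longrightarrow> take (length a) b = a \<Longrightarrow>
      \<exists>X'\<in>R. leq X' X \<and> rn (d + i) X' = rn (d + i) X \<and> P b X'"
    and mono: "\<And>b X X'. P b X \<Longrightarrow> X \<in> R \<Longrightarrow> X' \<in> R \<Longrightarrow> leq X' X \<Longrightarrow> P b X'"
  obtains C where "C \<in> R" "leq C Y" "rn d C = rn d Y" "has_depth C a d"
    "\<And>Z q. Z \<in> bs a C \<Longrightarrow> length a \<le> q \<Longrightarrow> P (rn q Z) C"
proof -
  define Q where "Q i X X' \<longleftrightarrow> (\<forall>b\<in>ext_level a d i X. P b X')" for i X X'
  have level_step: "\<exists>X'\<in>R. leq X' X \<and> rn (d + i) X' = rn (d + i) X \<and> Q i X X'"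
    if X: "X \<in> R" "leq X Y" "rn d X = rn d Y" for i X
  proof -
    have "\<forall>b\<in>ext_level a d i X. has_depth X b (d + i)"
      using ext_level_has_depth[OF X(1) has_depth_mono[OF Y X]] by blast
    moreover have "\<exists>X''\<in>R. leq X'' X' \<and> rn (d + i) X'' = rn (d + i) X' \<and> P b X''"
      if "X' \<in> R" "leq X' X" "b \<in> ext_level a d i X" "has_depth X' b (d + i)" for X' b
      using step[OF that(1) leR_trans[OF that(1) X(1) that(2) X(2)] that(4)]
        ext_level_prefix[OF that(3)] by blast
    ultimately show ?thesis
      unfolding Q_def using fix_finitely_many[OF X(1) ext_level_finite[OF X(1)]] mono by blast
  qed
  obtain Bs C where "\<And>i. Q i (Bs i) (Bs (Suc i))"
    "C \<in> R" "leq C Y" "rn d C = rn d Y" "\<And>i. Bs i \<in> R" "\<And>i. leq C (Bs i)"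
    "\<And>i. rn (d + i) C = rn (d + i) (Bs i)"
    using fusion_iterate[OF Y(1), of d Q] level_step by blast
  note Bs = this(1,5) and C = this(2-4,6,7)
  have dC: "has_depth C a d"
    using has_depth_mono[OF Y C(1-3)] .
  have "P (rn q Z) C" if Z: "Z \<in> bs a C" and q: "length a \<le> q" for Z q
  proof -
    obtain i where
      "\<And>X. X \<in> R \<Longrightarrow> leq C X \<Longrightarrow> rn (d + i) C = rn (d + i) X \<Longrightarrow> rn q Z \<in> ext_level a d i X"
      using extension_in_level[OF C(1) dC Z q] by blast
    then have "rn q Z \<in> ext_level a d i (Bs i)"
      using Bs(2) C(4,5) by blast
    then have "P (rn q Z) (Bs (Suc i))"
      using Bs(1)[of i] by (simp add: Q_def)
    then show "P (rn q Z) C"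
      by (rule mono[OF _ Bs(2) C(1) C(4)])
  qed
  then show ?thesis
    by (rule that[OF C(1-3) dC])
qed

section \<open>Accepting and rejecting\<close>

definition rejects :: "seqR set \<Rightarrow> seqR \<Rightarrow> block list \<Rightarrow> bool" where
  "rejects U X b \<longleftrightarrow> (\<forall>Y\<in>R. leq Y X \<longrightarrow> bs b Y \<noteq> {} \<longrightarrow> \<not> bs b Y \<subseteq> U)"

definition decides :: "seqR set \<Rightarrow> seqR \<Rightarrow> block list \<Rightarrow> bool" where
  "decides U X b \<longleftrightarrow> bs b X \<subseteq> U \<or> rejects U X b"

lemma decides_mono: "decides U X b \<Longrightarrow> X \<in> R \<Longrightarrow> Y \<in> R \<Longrightarrow> leq Y X \<Longrightarrow> decides U Y b"
  unfolding decides_def rejects_def using basic_mono leR_trans by blast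

lemma decide_at_depth:
  assumes Y: "Y \<in> R" and d: "has_depth Y a e"
  shows "\<exists>X\<in>R. leq X Y \<and> rn e X = rn e Y \<and> decides U X a"
proof (cases "rejects U Y a")
  case True
  then show ?thesis using Y leR_refl by (auto simp: decides_def)
next
  case False
  then obtain Y' where Y': "Y' \<in> R" "leq Y' Y" "bs a Y' \<noteq> {}" "bs a Y' \<subseteq> U"
    by (auto simp: rejects_def)
  then obtain X where "X \<in> R" "leq X Y" "rn e X = rn e Y" "bs a X \<subseteq> bs a Y'"
    using shrink_fixing_depth[OF Y d] by metis
  with Y'(4) show ?thesis unfolding decides_def by blast
qed

lemma decide_extensions:
  assumes Y: "Y \<in> R" and d: "has_depth Y a e"
  obtains L where "L \<in> R" "leq L Y" "rn e L = rn e Y" "has_depth L a e"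
    "\<And>Z q. Z \<in> bs a L \<Longrightarrow> length a \<le> q \<Longrightarrow> decides U L (rn q Z)"
proof -
  define P where "P b X \<longleftrightarrow> decides U X b" for b X
  have step: "\<exists>X'\<in>R. leq X' X \<and> rn (e + i) X' = rn (e + i) X \<and> P b X'"
    if "X \<in> R" "leq X Y" "has_depth X b (e + i)" "length a \<le> length b" "take (length a) b = a"
    for i X b
    unfolding P_def by (rule decide_at_depth[OF that(1,3)])
  have mono: "P b X' \<Longrightarrow> X' \<in> R \<Longrightarrow> X'' \<in> R \<Longrightarrow> leq X'' X' \<Longrightarrow> P b X''" for b X' X''
    unfolding P_def by (rule decides_mono)
  obtain L where "L \<in> R" "leq L Y" "rn e L = rn e Y" "has_depth L a e"
    "\<And>Z q. Z \<in> bs a L \<Longrightarrow> length a \<le> q \<Longrightarrow> P (rn q Z) L"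
    using diagonal_fusion[where P = P, OF Y d] step mono by blast
  then show ?thesis
    using that unfolding P_def by blast
qed

lemma propagate_rejection:
  assumes Y: "Y \<in> R" and dec: "\<And>Z q. Z \<in> bs a Y \<Longrightarrow> length a \<le> q \<Longrightarrow> decides U Y (rn q Z)"
    and X: "X \<in> R" "leq X Y" and d: "has_depth X b e"
    and b: "length a \<le> length b" "take (length a) b = a"
  shows "\<exists>X'\<in>R. leq X' X \<and> rn e X' = rn e X \<and>
    (rejects U Y b \<longrightarrow> (\<forall>Z\<in>bs b X'. rejects U Y (rn (Suc (length b)) Z)))"
proof (cases "rejects U Y b")
  case False
  then show ?thesis using X leR_refl by blast
next
  case True
  obtain X' where X': "X' \<in> R" "leq X' X" "rn e X' = rn e X"
    and hom: "(\<forall>Z\<in>bs b X'. rejects U Y (rn (Suc (length b)) Z)) \<or>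
      (\<forall>Z\<in>bs b X'. \<not> rejects U Y (rn (Suc (length b)) Z))"
    using homogeneous_one_step[OF X(1) d, of "rejects U Y"] by blast
  have X'Y: "leq X' Y" using leR_trans[OF X'(1) X(1) X'(2) X(2)] .
  have "\<not> (\<forall>Z\<in>bs b X'. \<not> rejects U Y (rn (Suc (length b)) Z))"
  proof
    assume accepted: "\<forall>Z\<in>bs b X'. \<not> rejects U Y (rn (Suc (length b)) Z)"
    have "bs b X' \<subseteq> U"
    proof
      fix Z assume Z: "Z \<in> bs b X'"
      then have ZY: "Z \<in> R" "leq Z Y" "rn (length b) Z = b"
        using leR_trans[OF _ X'(1) _ X'Y] unfolding basic_iff by blast+
      then have "Z \<in> bs a Y"
        using take_rn[OF b(1), of Z] b(2) by (simp add: basic_iff)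
      then have "decides U Y (rn (Suc (length b)) Z)"
        using dec b(1) by simp
      then have "bs (rn (Suc (length b)) Z) Y \<subseteq> U"
        using accepted Z unfolding decides_def by blast
      moreover have "Z \<in> bs (rn (Suc (length b)) Z) Y"
        using ZY by (simp add: basic_iff)
      ultimately show "Z \<in> U" by blast
    qed
    moreover have "bs b X' \<noteq> {}"
      using has_depth_mono[OF X(1) d X'] by (simp add: has_depth_def)
    ultimately show False
      using True X'(1) X'Y unfolding rejects_def by blast
  qed
  with hom X' show ?thesis by blast
qed

lemma reject_extensions:
  assumes L: "L \<in> R" "has_depth L a d"
    and dec: "\<And>Z q. Z \<in> bs a L \<Longrightarrow> length a \<le> q \<Longrightarrow> decides U L (rn q Z)"
    and rej: "rejects U L a"
  obtains C where "C \<in> R" "leq C L" "has_depth C a d"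
    "\<And>Z q. Z \<in> bs a C \<Longrightarrow> length a \<le> q \<Longrightarrow> rejects U L (rn q Z)"
proof -
  define P where "P b X \<longleftrightarrow> (rejects U L b \<longrightarrow> (\<forall>Z\<in>bs b X. rejects U L (rn (Suc (length b)) Z)))"
    for b X
  have mono: "P b X'" if "P b X" "X \<in> R" "X' \<in> R" "leq X' X" for b X X'
    using that basic_mono[OF that(2-4)] unfolding P_def by blast
  have step: "\<exists>X'\<in>R. leq X' X \<and> rn e X' = rn e X \<and> P b X'"
    if "X \<in> R" "leq X L" "has_depth X b e" "length a \<le> length b" "take (length a) b = a" for X b e
    unfolding P_def by (rule propagate_rejection[OF L(1) dec that])
  obtain C where C: "C \<in> R" "leq C L" "rn d C = rn d L" "has_depth C a d"
    and P: "\<And>Z q. Z \<in> bs a C \<Longrightarrow> length a \<le> q \<Longrightarrow> P (rn q Z) C"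
    using diagonal_fusion[where P = P, OF L] step mono by blast
  have "rejects U L (rn q Z)" if Z: "Z \<in> bs a C" and q: "length a \<le> q" for Z q
    using q
  proof (induction q rule: dec_induct)
    case base
    then show ?case using Z rej by (simp add: basic_iff)
  next
    case (step q)
    have "Z \<in> bs (rn q Z) C"
      using Z by (simp add: basic_iff)
    with step P[OF Z step(1)] show ?case
      by (auto simp: P_def rn_Suc)
  qed
  with C that show ?thesis by blast
qed

section \<open>The Ellentuck topology\<close>

text \<open>The hypothesis on \<open>U\<close> says that \<open>U\<close> is Ellentuck-open.\<close>

lemma ramsey_open:
  assumes U: "\<And>W. W \<in> U \<Longrightarrow> \<exists>n. bs (rn n W) W \<subseteq> U" and B: "B \<in> R" and ne: "bs a B \<noteq> {}"
  shows "\<exists>C\<in>bs a B. bs a C \<subseteq> U \<or> bs a C \<inter> U = {}"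
proof -
  obtain d where d: "has_depth B a d" using has_depth_exists[OF B ne] .
  obtain L where L: "L \<in> R" "leq L B" "has_depth L a d"
    and dec: "\<And>Z q. Z \<in> bs a L \<Longrightarrow> length a \<le> q \<Longrightarrow> decides U L (rn q Z)"
    using decide_extensions[OF B d] by metis
  obtain Z where Z: "Z \<in> bs a L" using L(3) by (auto simp: has_depth_def)
  then have "decides U L a"
    using dec[of Z "length a"] by (simp add: basic_iff)
  then consider "bs a L \<subseteq> U" | "rejects U L a" by (auto simp: decides_def)
  then show ?thesis
  proof cases
    case 1
    moreover have "Z \<in> bs a B" using basic_mono[OF B L(1,2)] Z by blast
    moreover have "bs a Z \<subseteq> bs a L" using basic_mono[OF L(1)] Z by (simp add: basic_iff)
    ultimately show ?thesis by blast
  next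
    case 2
    obtain C' where C': "C' \<in> R" "leq C' L" "has_depth C' a d"
      and rej: "\<And>Z q. Z \<in> bs a C' \<Longrightarrow> length a \<le> q \<Longrightarrow> rejects U L (rn q Z)"
      using reject_extensions[OF L(1,3) dec 2] by blast
    obtain C where C: "C \<in> bs a C'" using C'(3) by (auto simp: has_depth_def)
    then have C_below: "C \<in> R" "leq C C'" by (auto simp: basic_iff)
    have "bs a C \<inter> U = {}"
    proof (rule ccontr)
      assume "bs a C \<inter> U \<noteq> {}"
      then obtain W where W: "W \<in> bs a C" "W \<in> U" by blast
      then obtain n where n: "bs (rn n W) W \<subseteq> U" using U by blast
      define n' where "n' = max n (length a)"
      have WR: "W \<in> R" "leq W C'"
        using W(1) C_below leR_trans by (auto simp: basic_iff)
      then have "rejects U L (rn n' W)"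
        using W(1) rej[of W n'] by (simp add: basic_iff n'_def)
      moreover have "W \<in> bs (rn n' W) W" "bs (rn n' W) W \<subseteq> U"
        using WR(1) leR_refl n basic_rn_mono[of n n' W W] by (auto simp: basic_iff n'_def)
      moreover have "leq W L" using leR_trans[OF WR(1) C'(1) WR(2) C'(2)] .
      ultimately show False
        using WR(1) unfolding rejects_def by blast
    qed
    moreover have "C \<in> bs a B"
      using basic_mono[OF B C'(1) leR_trans[OF C'(1) L(1) C'(2) L(2)]] C by blast
    ultimately show ?thesis by blast
  qed
qed

abbreviation "T \<equiv> ellentuck J A"

lemma basic_in_AR: "bs a B \<noteq> {} \<Longrightarrow> a \<in> AR J A"
proof -
  assume "bs a B \<noteq> {}"
  then obtain Z where "Z \<in> R" "rn (length a) Z = a" by (auto simp: basic_iff)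
  then have "a \<in> ARn J A (length a)"
    unfolding ARn_def by (intro CollectI exI[of _ Z]) simp
  then show ?thesis unfolding AR_def by blast
qed

lemma topspace_ellentuck: "topspace T = R"
proof
  show "topspace T \<subseteq> R"
    unfolding ellentuck_def topology_generated_by_topspace by (auto simp: basic_def)
  show "R \<subseteq> topspace T"
  proof
    fix W assume W: "W \<in> R"
    then have "W \<in> bs [] W" using leR_refl by (simp add: basic_iff rn_def)
    moreover from this have "[] \<in> AR J A" using basic_in_AR by blast
    ultimately show "W \<in> topspace T"
      unfolding ellentuck_def topology_generated_by_topspace using W by blast
  qed
qed

lemma openin_basic: "a \<in> AR J A \<Longrightarrow> B \<in> R \<Longrightarrow> openin T (bs a B)"
  unfolding ellentuck_def openin_topology_generated_by_iff
  by (rule generate_topology_on.Basis) blast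

lemma openin_ellentuck_basic_nbhd:
  assumes "openin T U" "W \<in> U"
  shows "\<exists>n. bs (rn n W) W \<subseteq> U"
proof -
  have "generate_topology_on {bs a B | a B. a \<in> AR J A \<and> B \<in> R} U"
    using assms(1) unfolding ellentuck_def openin_topology_generated_by_iff .
  then show ?thesis
    using assms(2)
  proof (induction arbitrary: W rule: generate_topology_on.induct)
    case (Int U V)
    then obtain n1 n2 where "bs (rn n1 W) W \<subseteq> U" "bs (rn n2 W) W \<subseteq> V" by blast
    then have "bs (rn (max n1 n2) W) W \<subseteq> U \<inter> V"
      using basic_rn_mono[of n1 "max n1 n2" W W] basic_rn_mono[of n2 "max n1 n2" W W] by auto
    then show ?case by blast
  next
    case (Basis s)
    then obtain a B where s: "s = bs a B" "B \<in> R" by blast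
    with Basis.prems have "W \<in> R" "leq W B" "rn (length a) W = a" by (auto simp: basic_iff)
    then have "bs (rn (length a) W) W \<subseteq> s"
      using basic_mono[OF s(2)] s(1) by simp
    then show ?case by blast
  next
    case (UN K)
    then obtain k where k: "k \<in> K" "W \<in> k" by blast
    with UN.IH obtain n where "bs (rn n W) W \<subseteq> k" by blast
    with k show ?case by blast
  qed simp
qed

lemma ramsey_null_subset: "ramsey_null J A N \<Longrightarrow> M \<subseteq> N \<Longrightarrow> ramsey_null J A M"
  unfolding ramsey_null_def by blast

lemma nowhere_dense_ramsey_null:
  assumes nd: "nowhere_dense_in T N"
  shows "ramsey_null J A N"
  unfolding ramsey_null_def
proof (intro allI impI)
  fix a B assume B: "B \<in> R" and ne: "bs a B \<noteq> {}"
  define U where "U = topspace T - T closure_of N"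
  have "openin T U" unfolding U_def by (simp add: openin_diff)
  then obtain C where C: "C \<in> bs a B" "bs a C \<subseteq> U \<or> bs a C \<inter> U = {}"
    using ramsey_open[OF openin_ellentuck_basic_nbhd B ne] by blast
  have CC: "C \<in> bs a C" using basic_self[OF C(1)] .
  show "\<exists>C\<in>bs a B. bs a C \<inter> N = {}"
  proof (cases "bs a C \<subseteq> U")
    case True
    then show ?thesis
      using C(1) closure_of_subset nd by (fastforce simp: U_def nowhere_dense_in_def)
  next
    case False
    have "a \<in> AR J A" using basic_in_AR[of a C] CC by blast
    moreover have "C \<in> R" using CC by (simp add: basic_iff)
    ultimately have "openin T (bs a C)"
      by (rule openin_basic)
    moreover have "bs a C \<subseteq> T closure_of N"
      using False C(2) topspace_ellentuck by (auto simp: U_def basic_def)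
    ultimately have "bs a C \<subseteq> T interior_of (T closure_of N)"
      using interior_of_maximal by blast
    then show ?thesis using nd CC by (auto simp: nowhere_dense_in_def)
  qed
qed

lemma ramsey_null_at_depth:
  assumes N: "ramsey_null J A N" and Y: "Y \<in> R" and d: "has_depth Y b e"
  shows "\<exists>X\<in>R. leq X Y \<and> rn e X = rn e Y \<and> bs b X \<inter> N = {}"
proof -
  have "bs b Y \<noteq> {}" using d by (simp add: has_depth_def)
  then obtain C where C: "C \<in> bs b Y" "bs b C \<inter> N = {}"
    using N Y unfolding ramsey_null_def by blast
  then have CY: "C \<in> R" "leq C Y" "bs b C \<noteq> {}"
    using basic_self[OF C(1)] by (auto simp: basic_iff)
  obtain X where "X \<in> R" "leq X Y" "rn e X = rn e Y" "bs b X \<subseteq> bs b C"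
    using shrink_fixing_depth[OF Y d CY] by blast
  with C(2) show ?thesis by blast
qed

lemma ramsey_null_Union:
  fixes NN :: "nat \<Rightarrow> seqR set"
  assumes NN: "\<And>j. ramsey_null J A (NN j)"
  shows "ramsey_null J A (\<Union>j. NN j)"
  unfolding ramsey_null_def
proof (intro allI impI)
  fix a B assume B: "B \<in> R" and ne: "bs a B \<noteq> {}"
  obtain d where d: "has_depth B a d" using has_depth_exists[OF B ne] .
  define P where "P b X \<longleftrightarrow> bs b X \<inter> NN (length b - length a) = {}" for b X
  have step: "\<exists>X'\<in>R. leq X' X \<and> rn (d + i) X' = rn (d + i) X \<and> P b X'"
    if "X \<in> R" "leq X B" "has_depth X b (d + i)" "length a \<le> length b" "take (length a) b = a"
    for i X b
    unfolding P_def using ramsey_null_at_depth[OF NN that(1,3)] .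
  have mono: "P b X'' " if "P b X'" "X' \<in> R" "X'' \<in> R" "leq X'' X'" for b X' X''
    using that(1) basic_mono[OF that(2-4)] unfolding P_def by blast
  obtain C where C: "C \<in> R" "leq C B" "rn d C = rn d B" "has_depth C a d"
    and P: "\<And>Z q. Z \<in> bs a C \<Longrightarrow> length a \<le> q \<Longrightarrow> P (rn q Z) C"
    using diagonal_fusion[where P = P, OF B d] step mono by blast
  obtain C' where C': "C' \<in> bs a C" using C(4) by (auto simp: has_depth_def)
  have "bs a C' \<inter> (\<Union>j. NN j) = {}"
  proof (rule ccontr)
    assume "bs a C' \<inter> (\<Union>j. NN j) \<noteq> {}"
    then obtain W j where W: "W \<in> bs a C'" "W \<in> NN j" by blast
    have "C' \<in> R" "leq C' C" using C' by (simp_all add: basic_iff)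
    then have "W \<in> bs a C"
      using W(1) basic_mono[OF C(1)] by blast
    then have "bs (rn (length a + j) W) C \<inter> NN j = {}"
      using P[of W "length a + j"] by (simp add: P_def)
    moreover have "W \<in> bs (rn (length a + j) W) C"
      using \<open>W \<in> bs a C\<close> by (simp add: basic_iff)
    ultimately show False using W(2) by blast
  qed
  moreover have "C' \<in> bs a B" using basic_mono[OF B C(1,2)] C' by blast
  ultimately show "\<exists>C\<in>bs a B. bs a C \<inter> (\<Union>j. NN j) = {}" by blast
qed

lemma meager_ramsey_null:
  assumes "meager_in T X"
  shows "ramsey_null J A X"
proof -
  obtain F where F: "countable F" "\<And>N. N \<in> F \<Longrightarrow> nowhere_dense_in T N" "X \<subseteq> \<Union>F"
    using assms by (auto simp: meager_in_def)
  have "ramsey_null J A (\<Union>F)"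
  proof (cases "F = {}")
    case True
    then show ?thesis using basic_self by (auto simp: ramsey_null_def)
  next
    case False
    then have "\<Union>F = (\<Union>j. from_nat_into F j)"
      using range_from_nat_into[OF False F(1)] by simp
    moreover have "ramsey_null J A (from_nat_into F j)" for j
      using nowhere_dense_ramsey_null F(2) from_nat_into[OF False] by blast
    ultimately show ?thesis using ramsey_null_Union by simp
  qed
  then show ?thesis using F(3) ramsey_null_subset by blast
qed

lemma baire_ramsey:
  assumes X: "baire_property_in T X"
  shows "ramsey_set J A X"
  unfolding ramsey_set_def
proof (intro allI impI)
  fix a B assume B: "B \<in> R" and ne: "bs a B \<noteq> {}"
  obtain U where U: "openin T U" "meager_in T ((X - U) \<union> (U - X))"
    using X by (auto simp: baire_property_in_def)
  obtain C1 where C1: "C1 \<in> bs a B" "bs a C1 \<inter> ((X - U) \<union> (U - X)) = {}"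
    using meager_ramsey_null[OF U(2)] B ne unfolding ramsey_null_def by blast
  then have C1R: "C1 \<in> R" "leq C1 B" by (auto simp: basic_iff)
  obtain C2 where C2: "C2 \<in> bs a C1" "bs a C2 \<subseteq> U \<or> bs a C2 \<inter> U = {}"
    using ramsey_open[OF openin_ellentuck_basic_nbhd[OF U(1)] C1R(1)] basic_self[OF C1(1)] by blast
  have C2R: "C2 \<in> R" "leq C2 C1" using C2(1) by (simp_all add: basic_iff)
  have "C2 \<in> bs a B" using basic_mono[OF B C1R] C2(1) by blast
  moreover have "bs a C2 \<subseteq> bs a C1" using basic_mono[OF C1R(1) C2R] .
  ultimately show "\<exists>C\<in>bs a B. bs a C \<subseteq> X \<or> bs a C \<inter> X = {}"
    using C1(2) C2(2) by blast
qed

section \<open>Todorcevic's axioms and closedness\<close>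

lemma le_fin_iff:
  "le_fin J A a b \<longleftrightarrow> (\<exists>C\<in>R. \<exists>B\<in>R. leq C B \<and> rn (length a) C = a \<and> rn (length b) B = b \<and>
    (\<forall>k<length a. \<exists>l<length b. sub_block k (C k) (B l)))"
proof
  assume "le_fin J A a b"
  then obtain C B where CB: "C \<in> R" "B \<in> R" "leq C B" "a = rn (length a) C" "b = rn (length b) B"
    "fst ` set a \<subseteq> fst ` set b" by (auto simp: le_fin_def)
  have "\<exists>l<length b. sub_block k (C k) (B l)" if k: "k < length a" for k
  proof -
    obtain l where l: "sub_block k (C k) (B l)" using CB(3) leR_iff by blast
    have "a ! k = C k" using k CB(4) by (metis rn_nth)
    then have "fst (C k) \<in> fst ` set b" using CB(6) k by (metis image_eqI nth_mem subsetD)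
    then obtain l' where l': "l' < length b" "fst (C k) = fst (b ! l')"
      by (metis imageE in_set_conv_nth)
    have "b ! l' = B l'" using l'(1) CB(5) by (metis rn_nth)
    then have "l = l'"
      using l l' RR_fst_eq[OF CB(2)] by (simp add: sub_block_def)
    with l l' show ?thesis by blast
  qed
  with CB show "\<exists>C\<in>R. \<exists>B\<in>R. leq C B \<and> rn (length a) C = a \<and> rn (length b) B = b \<and>
    (\<forall>k<length a. \<exists>l<length b. sub_block k (C k) (B l))" by metis
next
  assume "\<exists>C\<in>R. \<exists>B\<in>R. leq C B \<and> rn (length a) C = a \<and> rn (length b) B = b \<and>
    (\<forall>k<length a. \<exists>l<length b. sub_block k (C k) (B l))"
  then obtain C B where CB: "C \<in> R" "B \<in> R" "leq C B" "rn (length a) C = a" "rn (length b) B = b"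
    "\<forall>k<length a. \<exists>l<length b. sub_block k (C k) (B l)" by blast
  have "fst ` set a \<subseteq> fst ` set b"
  proof
    fix x assume "x \<in> fst ` set a"
    then obtain k where k: "k < length a" "x = fst (a ! k)" by (metis imageE in_set_conv_nth)
    obtain l where l: "l < length b" "sub_block k (C k) (B l)" using CB(6) k by blast
    have "a ! k = C k" "b ! l = B l" using k l CB(4,5) by (metis rn_nth)+
    with k l have "x = fst (b ! l)" by (simp add: sub_block_def)
    with l show "x \<in> fst ` set b" by auto
  qed
  with CB show "le_fin J A a b" unfolding le_fin_def by metis
qed

lemma le_fin_rn:
  assumes B: "B \<in> R"
  shows "le_fin J A a (rn n B) \<longleftrightarrow> (\<exists>Z\<in>bs a B. \<forall>k<length a. \<exists>l<n. sub_block k (Z k) (B l))"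
proof
  assume "le_fin J A a (rn n B)"
  then obtain C B' where CB: "C \<in> R" "B' \<in> R" "leq C B'" "rn (length a) C = a" "rn n B' = rn n B"
    "\<forall>k<length a. \<exists>l<n. sub_block k (C k) (B' l)" unfolding le_fin_iff by auto
  then have below: "\<forall>k<length a. \<exists>l<n. sub_block k (C k) (B l)"
    unfolding rn_eq_iff by metis
  then obtain Z where Z: "Z \<in> R" "rn (length a) Z = rn (length a) C" "leq Z B"
    using extend_prefix[OF B CB(1)] by blast
  then have "Z \<in> bs a B" using CB(4) by (simp add: basic_iff)
  moreover have "\<forall>k<length a. Z k = C k" using Z(2) by (simp add: rn_eq_iff)
  ultimately show "\<exists>Z\<in>bs a B. \<forall>k<length a. \<exists>l<n. sub_block k (Z k) (B l)"
    using below by metis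
next
  assume "\<exists>Z\<in>bs a B. \<forall>k<length a. \<exists>l<n. sub_block k (Z k) (B l)"
  then obtain Z where "Z \<in> bs a B" "\<forall>k<length a. \<exists>l<n. sub_block k (Z k) (B l)" by blast
  with B show "le_fin J A a (rn n B)" unfolding le_fin_iff basic_iff by auto
qed

lemma le_fin_rn_iff_depth:
  assumes B: "B \<in> R" and d: "has_depth B a e"
  shows "le_fin J A a (rn n B) \<longleftrightarrow> e \<le> n"
proof
  assume "le_fin J A a (rn n B)"
  then obtain Z where Z: "Z \<in> bs a B" "\<forall>k<length a. \<exists>l<n. sub_block k (Z k) (B l)"
    using le_fin_rn[OF B] by blast
  show "e \<le> n"
  proof (cases "a = []")
    case True
    with d show ?thesis by (simp add: has_depth_def)
  next
    case False
    then have "length a - 1 < length a" by simp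
    then obtain l where l: "l < n" "sub_block (length a - 1) (Z (length a - 1)) (B l)"
      using Z(2) by blast
    then have "fst (B l) = fst (B (e - 1))"
      using basic_last[OF Z(1) False] d False by (simp add: has_depth_def sub_block_def)
    then have "l = e - 1" using RR_fst_eq[OF B] by blast
    with l d False show ?thesis by (simp add: has_depth_def)
  qed
next
  assume "e \<le> n"
  moreover obtain Z where Z: "Z \<in> bs a B" using d by (auto simp: has_depth_def)
  ultimately have "\<forall>k<length a. \<exists>l<n. sub_block k (Z k) (B l)"
    using has_depth_blocks[OF B Z d] by (meson less_le_trans)
  with Z show "le_fin J A a (rn n B)" using le_fin_rn[OF B] by blast
qed

lemma depth_eq: "B \<in> R \<Longrightarrow> has_depth B a e \<Longrightarrow> depth J A B a = e"
  unfolding depth_def using le_fin_rn_iff_depth by (intro Least_equality) auto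

lemma depth_finite_iff:
  assumes B: "B \<in> R"
  shows "depth_finite J A B a \<longleftrightarrow> bs a B \<noteq> {}"
proof
  assume "depth_finite J A B a"
  then show "bs a B \<noteq> {}" using le_fin_rn[OF B] by (auto simp: depth_finite_def)
next
  assume "bs a B \<noteq> {}"
  then obtain e where "has_depth B a e" using has_depth_exists[OF B] by blast
  then show "depth_finite J A B a"
    using le_fin_rn_iff_depth[OF B] by (auto simp: depth_finite_def)
qed

lemma depth_finite_has_depth:
  assumes "B \<in> R" "depth_finite J A B a"
  shows "has_depth B a (depth J A B a)"
proof -
  obtain e where "has_depth B a e"
    using has_depth_exists[OF assms(1)] depth_finite_iff[OF assms(1)] assms(2) by blast
  with depth_eq[OF assms(1) this] show ?thesis by simp
qed

lemma axiom_A1: "axiom_A1 J A"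
  unfolding axiom_A1_def
proof (intro conjI)
  show "\<forall>X\<in>R. rn 0 X = []" by (simp add: rn_def)
  show "\<forall>X\<in>R. \<forall>Y\<in>R. X \<noteq> Y \<longrightarrow> (\<exists>n. rn n X \<noteq> rn n Y)"
  proof (intro ballI impI)
    fix X Y :: seqR assume "X \<noteq> Y"
    then obtain k where "X k \<noteq> Y k" by (auto simp: fun_eq_iff)
    then have "rn (Suc k) X \<noteq> rn (Suc k) Y" by (auto simp: rn_eq_iff)
    then show "\<exists>n. rn n X \<noteq> rn n Y" by blast
  qed
  show "\<forall>X\<in>R. \<forall>Y\<in>R. \<forall>n m. rn n X = rn m Y \<longrightarrow> n = m \<and> (\<forall>i<n. rn i X = rn i Y)"
  proof (intro ballI allI impI)
    fix X Y :: seqR and n m assume eq: "rn n X = rn m Y"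
    then have "length (rn n X) = length (rn m Y)" by (rule arg_cong)
    then have "n = m" by simp
    with eq show "n = m \<and> (\<forall>i<n. rn i X = rn i Y)" using rn_eq_mono[of n X Y] by auto
  qed
qed

lemma le_fin_trans:
  assumes ab: "le_fin J A a b" and bc: "le_fin J A b c"
  shows "le_fin J A a c"
proof -
  obtain C1 B1 where 1: "C1 \<in> R" "B1 \<in> R" "leq C1 B1" "rn (length a) C1 = a" "rn (length b) B1 = b"
    "\<forall>k<length a. \<exists>l<length b. sub_block k (C1 k) (B1 l)" using ab unfolding le_fin_iff by blast
  obtain C2 B2 where 2: "C2 \<in> R" "B2 \<in> R" "leq C2 B2" "rn (length b) C2 = b" "rn (length c) B2 = c"
    "\<forall>k<length b. \<exists>l<length c. sub_block k (C2 k) (B2 l)" using bc unfolding le_fin_iff by blast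
  have sub: "\<forall>k<length a. \<exists>l<length c. sub_block k (C1 k) (B2 l)"
  proof (intro allI impI)
    fix k assume k: "k < length a"
    obtain l where l: "l < length b" "sub_block k (C1 k) (B1 l)" using 1(6) k by blast
    have "k \<le> l" using sub_block_index_ge[OF 1(1-3) l(2)] .
    moreover have "B1 l = C2 l" using 1(5) 2(4) l(1) by (metis rn_nth)
    then obtain l' where "l' < length c" "sub_block l (B1 l) (B2 l')" using 2(6) l(1) by auto
    ultimately show "\<exists>l<length c. sub_block k (C1 k) (B2 l)" using sub_block_trans[OF l(2)] by blast
  qed
  then obtain C where C: "C \<in> R" "rn (length a) C = rn (length a) C1" "leq C B2"
    using extend_prefix[OF 2(2) 1(1)] by blast
  then have "\<forall>k<length a. C k = C1 k" by (simp add: rn_eq_iff)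
  with C 1(4) 2(2,5) sub show "le_fin J A a c"
    unfolding le_fin_iff by (intro bexI[of _ C] bexI[of _ B2]) auto
qed

lemma finite_le_fin: "finite {a. le_fin J A a b}"
proof -
  define M where "M = Max (insert 0 (fst ` set b))"
  have "{a. le_fin J A a b} \<subseteq>
      {a. length a \<le> Suc M \<and> (\<forall>k<length a. is_block k (a ! k) \<and> k \<le> fst (a ! k) \<and> fst (a ! k) \<le> M)}"
  proof clarify
    fix a assume "le_fin J A a b"
    then obtain C where C: "C \<in> R" "a = rn (length a) C" "fst ` set a \<subseteq> fst ` set b"
      by (auto simp: le_fin_def)
    have ak: "a ! k = C k" if "k < length a" for k using that C(2) by (metis rn_nth)
    have le: "fst (a ! k) \<le> M" if "k < length a" for k
      using C(3) that unfolding M_def by (meson List.finite_set Max_ge finite_imageI finite_insert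
          image_eqI insertCI nth_mem subsetD)
    have "strict_mono (\<lambda>k. fst (C k))" using C(1) by (simp add: RR_iff)
    then have ge: "k \<le> fst (a ! k)" if "k < length a" for k
      using strict_mono_imp_increasing ak[OF that] by metis
    have "length a \<le> Suc M"
    proof (cases "a = []")
      case False
      then show ?thesis using le[of "length a - 1"] ge[of "length a - 1"] by auto
    qed simp
    with ak le ge C(1) show "length a \<le> Suc M \<and> (\<forall>k<length a. is_block k (a ! k) \<and> k \<le> fst (a ! k) \<and> fst (a ! k) \<le> M)"
      by (simp add: RR_block)
  qed
  then show ?thesis using finite_block_lists finite_subset by blast
qed

lemma leR_iff_le_fin:
  assumes X: "X \<in> R" and Y: "Y \<in> R"
  shows "leq X Y \<longleftrightarrow> (\<forall>n. \<exists>m. le_fin J A (rn n X) (rn m Y))"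
proof
  assume le: "leq X Y"
  obtain ix where ix: "strict_mono ix" "\<And>k. sub_block k (X k) (Y (ix k))"
    using leR_index[OF X Y le] by blast
  show "\<forall>n. \<exists>m. le_fin J A (rn n X) (rn m Y)"
  proof
    fix n
    have "\<forall>k<n. \<exists>l<ix n. sub_block k (X k) (Y l)" using ix strict_monoD by blast
    then have "le_fin J A (rn n X) (rn (ix n) Y)" unfolding le_fin_iff using X Y le by auto
    then show "\<exists>m. le_fin J A (rn n X) (rn m Y)" by blast
  qed
next
  assume h: "\<forall>n. \<exists>m. le_fin J A (rn n X) (rn m Y)"
  show "leq X Y"
    unfolding leR_iff
  proof
    fix k
    obtain m where "le_fin J A (rn (Suc k) X) (rn m Y)" using h by blast
    then obtain C B where CB: "rn (Suc k) C = rn (Suc k) X" "rn m B = rn m Y"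
      "\<forall>k'<Suc k. \<exists>l<m. sub_block k' (C k') (B l)" unfolding le_fin_iff by auto
    then obtain l where "l < m" "sub_block k (C k) (B l)" by blast
    moreover have "C k = X k" using CB(1) by (simp add: rn_eq_iff)
    moreover have "B l = Y l" using CB(2) \<open>l < m\<close> by (simp add: rn_eq_iff)
    ultimately show "\<exists>l. sub_block k (X k) (Y l)" by auto
  qed
qed

lemma le_fin_prefix:
  assumes pre: "prefix a b" and bc: "le_fin J A b c"
  shows "le_fin J A a c"
proof -
  obtain C B where CB: "C \<in> R" "B \<in> R" "leq C B" "rn (length b) C = b" "rn (length c) B = c"
    "\<forall>k<length b. \<exists>l<length c. sub_block k (C k) (B l)" using bc unfolding le_fin_iff by blast
  have la: "length a \<le> length b" using pre by (simp add: prefix_length_le)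
  have "a = take (length a) b" using pre by (metis append_eq_conv_conj prefixE)
  then have "rn (length a) C = a" using take_rn[OF la, of C] CB(4) by simp
  with CB la show ?thesis unfolding le_fin_iff by (meson less_le_trans)
qed

lemma axiom_A2: "axiom_A2 J A"
  unfolding axiom_A2_def
proof (intro conjI ballI allI impI)
  fix a assume "a \<in> AR J A"
  then obtain B where "B \<in> R" "a = rn (length a) B" unfolding AR_def ARn_def by auto
  then show "le_fin J A a a" unfolding le_fin_def using leR_refl by blast
qed (use le_fin_trans finite_le_fin leR_iff_le_fin le_fin_prefix in blast)+

lemma axiom_A3: "axiom_A3 J A"
  unfolding axiom_A3_def
proof (intro conjI ballI allI impI)
  fix a B X assume B: "B \<in> R" and df: "depth_finite J A B a" and X: "X \<in> bs (rn (depth J A B a) B) B"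
  have d: "has_depth B a (depth J A B a)" using depth_finite_has_depth[OF B df] .
  have "X \<in> R" "leq X B" "rn (depth J A B a) X = rn (depth J A B a) B" using X by (simp_all add: basic_iff)
  then show "bs a X \<noteq> {}" using has_depth_mono[OF B d] by (simp add: has_depth_def)
next
  fix a X B assume X: "X \<in> R" and B: "B \<in> R" and le: "leq X B" and ne: "bs a X \<noteq> {}"
  then have "bs a B \<noteq> {}" using basic_mono[OF B X le] by blast
  then have d: "has_depth B a (depth J A B a)"
    using depth_finite_has_depth[OF B] depth_finite_iff[OF B] by blast
  obtain X' where X': "X' \<in> R" "leq X' B" "rn (depth J A B a) X' = rn (depth J A B a) B" "bs a X' \<subseteq> bs a X"
    using shrink_fixing_depth[OF B d X le ne] by blast
  moreover have "bs a X' \<noteq> {}"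
    using has_depth_mono[OF B d X'(1-3)] by (simp add: has_depth_def)
  ultimately show "\<exists>X'\<in>bs (rn (depth J A B a) B) B. bs a X' \<noteq> {} \<and> bs a X' \<subseteq> bs a X"
    by (auto simp: basic_iff)
qed

lemma axiom_A4: "axiom_A4 J A"
  unfolding axiom_A4_def
proof (intro ballI allI impI)
  fix a B Ob assume B: "B \<in> R" and "depth_finite J A B a"
  then have d: "has_depth B a (depth J A B a)" by (rule depth_finite_has_depth)
  obtain X where "X \<in> R" "leq X B" "rn (depth J A B a) X = rn (depth J A B a) B"
    "(\<forall>Z\<in>bs a X. rn (Suc (length a)) Z \<in> Ob) \<or> (\<forall>Z\<in>bs a X. rn (Suc (length a)) Z \<notin> Ob)"
    using homogeneous_one_step[OF B d, of "\<lambda>x. x \<in> Ob"] by blast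
  then show "\<exists>X\<in>bs (rn (depth J A B a) B) B.
      rn (Suc (length a)) ` bs a X \<subseteq> Ob \<or> rn (Suc (length a)) ` bs a X \<subseteq> - Ob"
    by (intro bexI[of _ X]) (auto simp: basic_iff)
qed

lemma coherent_approximations_realised:
  assumes all: "\<And>n m. \<exists>B\<in>R. rn n B = f n \<and> rn m B = f m"
  shows "\<exists>B\<in>R. (\<lambda>n. rn n B) = f"
proof -
  have len: "length (f n) = n" for n
  proof -
    obtain B where "rn n B = f n" using all[of n n] by blast
    then show ?thesis using rn_length[of n B] by simp
  qed
  have tk: "take n (f m) = f n" if "n \<le> m" for n m
    using all[of n m] take_rn[OF that] by metis
  define B where "B k = f (Suc k) ! k" for k
  have fB: "f n ! k = B k" if "k < n" for n k
    using tk[of "Suc k" n] that by (metis B_def Suc_leI lessI nth_take)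
  have "B \<in> R"
    unfolding RR_iff
  proof
    have "fst (B k) < fst (B (Suc k))" for k
    proof -
      obtain B' where B': "B' \<in> R" "rn (Suc (Suc k)) B' = f (Suc (Suc k))" using all by blast
      then have "B k = B' k" "B (Suc k) = B' (Suc k)"
        using fB[of k "Suc (Suc k)"] fB[of "Suc k" "Suc (Suc k)"] by (metis lessI less_SucI rn_nth)+
      then show ?thesis using RR_fst_less[OF B'(1)] by simp
    qed
    then show "strict_mono (\<lambda>k. fst (B k))" by (simp add: strict_mono_Suc_iff)
    show "\<forall>k. is_block k (B k)"
    proof
      fix k
      obtain B' where B': "B' \<in> R" "rn (Suc k) B' = f (Suc k)" using all by blast
      then have "B k = B' k" by (metis B_def lessI rn_nth)
      then show "is_block k (B k)" using RR_block[OF B'(1)] by simp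
    qed
  qed
  moreover have "rn n B = f n" for n
    using len fB by (intro nth_equalityI) auto
  ultimately show ?thesis by blast
qed

lemma closedin_RR:
  "closedin (product_topology (\<lambda>_::nat. discrete_topology (AR J A)) UNIV) ((\<lambda>B n. rn n B) ` R)"
  (is "closedin ?P ?S")
proof -
  have top: "topspace ?P = {f. \<forall>n. f n \<in> AR J A}"
    by (auto simp: PiE_def extensional_def)
  have "rn n B \<in> AR J A" if "B \<in> R" for n B
    unfolding AR_def ARn_def using that by blast
  then have "?S \<subseteq> topspace ?P"
    using top by auto
  moreover have "\<exists>V. openin ?P V \<and> f \<in> V \<and> V \<subseteq> topspace ?P - ?S" if f: "f \<in> topspace ?P - ?S" for f
  proof -
    obtain n m where nm: "\<not> (\<exists>B\<in>R. rn n B = f n \<and> rn m B = f m)"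
      using coherent_approximations_realised f by blast
    have "openin ?P {g \<in> topspace ?P. g i \<in> {f i}}" for i
    proof (rule openin_continuous_map_preimage)
      show "continuous_map ?P (discrete_topology (AR J A)) (\<lambda>x. x i)"
        using continuous_map_product_projection[of i UNIV "\<lambda>_. discrete_topology (AR J A)"] by simp
      show "openin (discrete_topology (AR J A)) {f i}" using f top by auto
    qed
    then have "openin ?P ({g \<in> topspace ?P. g n \<in> {f n}} \<inter> {g \<in> topspace ?P. g m \<in> {f m}})"
      by blast
    moreover have "{g \<in> topspace ?P. g n \<in> {f n}} \<inter> {g \<in> topspace ?P. g m \<in> {f m}} \<subseteq> topspace ?P - ?S"
      using nm by auto
    ultimately show ?thesis using f by blast
  qed
  then have "openin ?P (topspace ?P - ?S)"
    by (subst openin_subopen) blast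
  ultimately show ?thesis by (simp add: closedin_def)
qed

end

theorem mainTheorem2:
  fixes J :: enat
    and I :: "nat \<Rightarrow> nat set"
    and ar :: "nat \<Rightarrow> nat \<Rightarrow> nat"
    and K :: "nat \<Rightarrow> ostr set"
    and A :: "nat \<Rightarrow> nat \<Rightarrow> ostr"
  assumes "1 \<le> J"
    and "\<And>j. enat j < J \<Longrightarrow> fraisse_class (I j) (ar j) (K j)"
    and "\<And>j. enat j < J \<Longrightarrow> ramsey_property (K j)"
    and "generating_seq J K A"
  shows "closedin (product_topology (\<lambda>_::nat. discrete_topology (AR J A)) UNIV)
            ((\<lambda>B n. rn n B) ` RR J A)
       \<and> axiom_A1 J A \<and> axiom_A2 J A \<and> axiom_A3 J A \<and> axiom_A4 J A
       \<and> (\<forall>X. X \<subseteq> RR J A \<longrightarrow> baire_property_in (ellentuck J A) X \<longrightarrow> ramsey_set J A X)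
       \<and> (\<forall>X. X \<subseteq> RR J A \<longrightarrow> meager_in (ellentuck J A) X \<longrightarrow> ramsey_null J A X)"
proof -
  have K: "A k j \<in> K j" "enat j < J" if "j < Jk J k" for k j
    using assms(4) that by (cases J; auto simp: generating_seq_def Jk_def)+
  have "block_space J A"
  proof
    fix k j assume "j < Jk J k"
    with K assms(2) show "wf_str (A k j)" "finite (univ (A k j))"
      unfolding fraisse_class_def is_Lstr_def by blast+
    show "substructure (A k j) (A (Suc k) j)"
      using assms(4) \<open>j < Jk J k\<close> by (simp add: generating_seq_def)
  next
    fix k m :: nat assume "k < m"
    then show "\<exists>n>m. arrow (Jk J k) (A n) (A m) (A k)"
      using assms(4) by (simp add: generating_seq_def)
  qed
  then show ?thesis
    using block_space.closedin_RR block_space.axiom_A1 block_space.axiom_A2 block_space.axiom_A3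
      block_space.axiom_A4 block_space.baire_ramsey block_space.meager_ramsey_null by blast
qed

end
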